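(* Let $k$ be an algebraically closed field, $G=\mathrm{GL}_3(k)$, $\mathfrak g=\mathfrak{gl}_3(k)$, $k[\mathfrak g]=k[\xi_{ij}:1\le i,j\le3]$, $\mathcal X=(\xi_{ij})$, and for $i,j$ let $|\mathcal X^{(i,j)}|$ denote the determinant of $\mathcal X$ with row $i$ and column $j$ removed. Put $$d_1=\xi_{21}|\mathcal X^{(1,3)}|+\xi_{31}|\mathcal X^{(1,2)}|,\qquad d_2=\xi_{31}|\mathcal X^{(2,3)}|+\xi_{32}|\mathcal X^{(1,3)}|.$$ (i) Let $\lambda=l_1\varpi_1+l_2\varpi_2$ with $l_1,l_2\ge0$ integers and $3\mid(l_1-l_2)$, and put $a=\min(l_1,l_2)$. Let $d=d_1^{(l_1-l_2)/3}$ if $l_1\ge l_2$ and $d=d_2^{(l_2-l_1)/3}$ otherwise. Then the elements $d\,\xi_{31}^i|\mathcal X^{(1,3)}|^{a-i}$, $0\le i\le a$, form a basis of the $k[\mathfrak g]^G$-module $k[\mathfrak g]^U_\lambda$. (ii) The $k$-algebra $k[\mathfrak g]^U$ is generated by $s_1,s_2,s_3,\xi_{31},|\mathcal X^{(1,3)}|,d_1,d_2$, and the kernel of the corresponding surjection from the polynomial ring in seven variables onto $k[\mathfrak g]^U$ is generated by the single relation $$d_1d_2-|\mathcal X^{(1,3)}|^3-\xi_{31}|\mathcal X^{(1,3)}|^2s_1-\xi_{31}^2|\mathcal X^{(1,3)}|s_2-\xi_{31}^3s_3=0.$$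
   Context: $G$ acts on $\mathfrak g$ by conjugation and on $k[\mathfrak g]$ by $(g\cdot f)(x)=f(g^{-1}xg)$. $U$ is the subgroup of upper unitriangular matrices, $T$ the diagonal torus; weights of $T$ are identified with $\mathbb Z^3$ (basis $\varepsilon_1,\varepsilon_2,\varepsilon_3$, $(\lambda_1,\lambda_2,\lambda_3)$ being $\mathrm{diag}(a_1,a_2,a_3)\mapsto\prod a_i^{\lambda_i}$), with $\varpi_1=\varepsilon_1-\frac13(1,1,1)$, $\varpi_2=\varepsilon_1+\varepsilon_2-\frac23(1,1,1)$. $k[\mathfrak g]^U_\lambda$ is the space of $U$-invariant polynomials of $T$-weight $\lambda$, a module over $k[\mathfrak g]^G$. $s_i(x)=\mathrm{tr}(\wedge^i x)$ for $i=1,2,3$. *)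

theory Defs
  imports "HOL-Analysis.Analysis" "HOL-Library.Poly_Mapping"
    "HOL-Computational_Algebra.Polynomial"
begin

text \<open>Matrices in gl_3(k) are elements of type 'k^3^3.  We index rows and
columns by the naturals 1,2,3, mapped to the numeral type 3 via of_nat
(so that 3 corresponds to the element 0 of type 3).\<close>

definition entry :: "'k^3^3 \<Rightarrow> nat \<Rightarrow> nat \<Rightarrow> 'k" where
  "entry x i j = x $ (of_nat i :: 3) $ (of_nat j :: 3)"

definition xi :: "nat \<Rightarrow> nat \<Rightarrow> 'k^3^3 \<Rightarrow> 'k" where
  "xi i j = (\<lambda>x. entry x i j)"

definition minor :: "nat \<Rightarrow> nat \<Rightarrow> 'k::comm_ring_1^3^3 \<Rightarrow> 'k" where
  "minor i j = (\<lambda>x.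
     let rs = sorted_list_of_set ({1,2,3} - {i});
         cs = sorted_list_of_set ({1,2,3} - {j})
     in entry x (rs!0) (cs!0) * entry x (rs!1) (cs!1)
        - entry x (rs!0) (cs!1) * entry x (rs!1) (cs!0))"

text \<open>s_i(x) = tr(wedge^i x): trace, sum of principal 2x2 minors, determinant.\<close>
definition s1 :: "'k::comm_ring_1^3^3 \<Rightarrow> 'k" where
  "s1 = (\<lambda>x. \<Sum>i\<in>{1,2,3}. entry x i i)"
definition s2 :: "'k::comm_ring_1^3^3 \<Rightarrow> 'k" where
  "s2 = (\<lambda>x. \<Sum>i\<in>{1,2,3}. minor i i x)"
definition s3 :: "'k::comm_ring_1^3^3 \<Rightarrow> 'k" where
  "s3 = (\<lambda>x. det x)"

definition d1 :: "'k::comm_ring_1^3^3 \<Rightarrow> 'k" where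
  "d1 = (\<lambda>x. xi 2 1 x * minor 1 3 x + xi 3 1 x * minor 1 2 x)"
definition d2 :: "'k::comm_ring_1^3^3 \<Rightarrow> 'k" where
  "d2 = (\<lambda>x. xi 3 1 x * minor 2 3 x + xi 3 2 x * minor 1 3 x)"

text \<open>k[g]: the algebra of polynomial functions on gl_3 (generated by the
coordinate functions).  Since k is algebraically closed, hence infinite,
this is isomorphic to the polynomial ring k[xi_ij].\<close>
inductive_set poly_fun :: "('k::comm_ring_1^3^3 \<Rightarrow> 'k) set" where
  pf_const: "(\<lambda>x. c) \<in> poly_fun"
| pf_coord: "(\<lambda>x. x $ i $ j) \<in> poly_fun"
| pf_add: "f \<in> poly_fun \<Longrightarrow> g \<in> poly_fun \<Longrightarrow> (\<lambda>x. f x + g x) \<in> poly_fun"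
| pf_mult: "f \<in> poly_fun \<Longrightarrow> g \<in> poly_fun \<Longrightarrow> (\<lambda>x. f x * g x) \<in> poly_fun"

definition act :: "'k::field^3^3 \<Rightarrow> ('k^3^3 \<Rightarrow> 'k) \<Rightarrow> ('k^3^3 \<Rightarrow> 'k)" where
  "act g f = (\<lambda>x. f (matrix_inv g ** x ** g))"

definition upper_unitri :: "'k::field^3^3 \<Rightarrow> bool" where
  "upper_unitri u \<longleftrightarrow> (\<forall>i\<in>{1,2,3}. \<forall>j\<in>{1,2,3}.
      (j < i \<longrightarrow> entry u i j = 0) \<and> (i = j \<longrightarrow> entry u i j = 1))"

definition diag3 :: "'k::field \<Rightarrow> 'k \<Rightarrow> 'k \<Rightarrow> 'k^3^3" where
  "diag3 a1 a2 a3 = (\<chi> i j. if i = j then (if i = 1 then a1 else if i = 2 then a2 else a3) else 0)"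

definition inv_G :: "('k::field^3^3 \<Rightarrow> 'k) set" where
  "inv_G = {f \<in> poly_fun. \<forall>g. invertible g \<longrightarrow> act g f = f}"

definition inv_U :: "('k::field^3^3 \<Rightarrow> 'k) set" where
  "inv_U = {f \<in> poly_fun. \<forall>u. upper_unitri u \<longrightarrow> act u f = f}"

definition inv_U_wt :: "int \<Rightarrow> int \<Rightarrow> int \<Rightarrow> ('k::field^3^3 \<Rightarrow> 'k) set" where
  "inv_U_wt l1 l2 l3 = {f \<in> inv_U. \<forall>a1 a2 a3. a1 \<noteq> 0 \<and> a2 \<noteq> 0 \<and> a3 \<noteq> 0 \<longrightarrow>
      act (diag3 a1 a2 a3) f = (\<lambda>x. (power_int a1 l1 * power_int a2 l2 * power_int a3 l3) * f x)}"

definition is_module_basis ::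
  "('a \<Rightarrow> 'k::comm_ring_1) set \<Rightarrow> ('a \<Rightarrow> 'k) set \<Rightarrow> (nat \<Rightarrow> 'a \<Rightarrow> 'k) \<Rightarrow> nat set \<Rightarrow> bool" where
  "is_module_basis R M b I \<longleftrightarrow>
     (\<forall>i\<in>I. b i \<in> M) \<and>
     (\<forall>f\<in>M. \<exists>c. (\<forall>i\<in>I. c i \<in> R) \<and> f = (\<lambda>x. \<Sum>i\<in>I. c i x * b i x)) \<and>
     (\<forall>c. (\<forall>i\<in>I. c i \<in> R) \<and> (\<lambda>x. \<Sum>i\<in>I. c i x * b i x) = (\<lambda>x. 0)
          \<longrightarrow> (\<forall>i\<in>I. c i = (\<lambda>x. 0)))"

inductive_set subalg_gen :: "('a \<Rightarrow> 'k::comm_ring_1) set \<Rightarrow> ('a \<Rightarrow> 'k) set" for S where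
  sg_const: "(\<lambda>x. c) \<in> subalg_gen S"
| sg_gen: "f \<in> S \<Longrightarrow> f \<in> subalg_gen S"
| sg_add: "f \<in> subalg_gen S \<Longrightarrow> g \<in> subalg_gen S \<Longrightarrow> (\<lambda>x. f x + g x) \<in> subalg_gen S"
| sg_mult: "f \<in> subalg_gen S \<Longrightarrow> g \<in> subalg_gen S \<Longrightarrow> (\<lambda>x. f x * g x) \<in> subalg_gen S"

type_synonym 'k mpoly = "(nat \<Rightarrow>\<^sub>0 nat) \<Rightarrow>\<^sub>0 'k"

definition mvar :: "nat \<Rightarrow> 'k::comm_ring_1 mpoly" where
  "mvar i = Poly_Mapping.single (Poly_Mapping.single i 1) 1"

definition mpoly_vars_in :: "nat set \<Rightarrow> 'k::zero mpoly \<Rightarrow> bool" where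
  "mpoly_vars_in V P \<longleftrightarrow> (\<forall>m\<in>Poly_Mapping.keys P. Poly_Mapping.keys m \<subseteq> V)"

definition mpoly_eval :: "'k::comm_ring_1 mpoly \<Rightarrow> (nat \<Rightarrow> 'a \<Rightarrow> 'k) \<Rightarrow> 'a \<Rightarrow> 'k" where
  "mpoly_eval P v = (\<lambda>x. \<Sum>m\<in>Poly_Mapping.keys P. Poly_Mapping.lookup P m * (\<Prod>i\<in>Poly_Mapping.keys m. v i x ^ Poly_Mapping.lookup m i))"

end

theory Submission
  imports Defs
begin

(* The seven generators are U-invariant: s1, s2, s3 are even conjugation invariant, and
   xi_31, |X^(1,3)|, d1, d2 are checked on a general unitriangular matrix. Modulo the relation R,
   every polynomial in Y0, ..., Y6 (standing for s1, s2, s3, xi_31, |X^(1,3)|, d1, d2) is congruent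
   to a reduced one, none of whose monomials is divisible by Y5 Y6.

   On the matrices [[u,0,0],[a,v,0],[0,b,w]] one has xi_31 = 0, and the generators take the values
   e1, e2, e3 of (u, v, w), 0, ab, a^2 b, a b^2. Distinct reduced monomials free of Y3 thus give
   distinct monomials in the independent quantities e1, e2, e3, a, b, so a reduced polynomial
   vanishing where xi_31 = 0 is divisible by Y3; a reduced polynomial vanishing everywhere is
   therefore zero, and the kernel is generated by R.

   Where xi_31 is nonzero, conjugating by U clears the entries (1,1), (2,1), (3,2), and the
   remaining entries of this normal form, times xi_31^3, are polynomials in the generators. Hence
   xi_31^N f is a polynomial in the generators for every U-invariant f, and the factors xi_31 are
   cancelled one at a time by the divisibility just described.

   The diagonal torus multiplies each generator by a character, so a U-invariant of weight lambda
   is a reduced polynomial whose monomials all have weight lambda; these are exactly the products of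
   a monomial in s1, s2, s3 with d xi_31^i |X^(1,3)|^(a-i). Independence over k[g]^G follows from
   the description of the kernel. *)

definition mat3 :: "'k::zero \<Rightarrow> 'k \<Rightarrow> 'k \<Rightarrow> 'k \<Rightarrow> 'k \<Rightarrow> 'k \<Rightarrow> 'k \<Rightarrow> 'k \<Rightarrow> 'k \<Rightarrow> 'k^3^3" where
  "mat3 a b c d e f g h i = vector [vector [a, b, c], vector [d, e, f], vector [g, h, i]]"

lemma mat3_nth [simp]:
  "mat3 a b c d e f g h i $1$1 = a" "mat3 a b c d e f g h i $1$2 = b" "mat3 a b c d e f g h i $1$3 = c"
  "mat3 a b c d e f g h i $2$1 = d" "mat3 a b c d e f g h i $2$2 = e" "mat3 a b c d e f g h i $2$3 = f"
  "mat3 a b c d e f g h i $3$1 = g" "mat3 a b c d e f g h i $3$2 = h" "mat3 a b c d e f g h i $3$3 = i"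
  by (simp_all add: mat3_def)

lemma mat3_expand:
  "(x::'k::zero^3^3) = mat3 (x$1$1) (x$1$2) (x$1$3) (x$2$1) (x$2$2) (x$2$3) (x$3$1) (x$3$2) (x$3$3)"
  by (simp add: vec_eq_iff forall_3)

lemma mat3_mult:
  "mat3 a b c d e f g h i ** mat3 a' b' c' d' e' f' g' h' i' =
   mat3 (a*a' + b*d' + c*g') (a*b' + b*e' + c*h') (a*c' + b*f' + c*i')
        (d*a' + e*d' + f*g') (d*b' + e*e' + f*h') (d*c' + e*f' + f*i')
        (g*a' + h*d' + i*g') (g*b' + h*e' + i*h') (g*c' + h*f' + i*i')"
  by (simp add: vec_eq_iff forall_3 matrix_matrix_mult_def sum_3)

lemma mat_1_eq_mat3: "(mat 1 :: 'k::{zero,one}^3^3) = mat3 1 0 0 0 1 0 0 0 1"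
  by (simp add: vec_eq_iff forall_3 mat_def)

lemma matrix_inv_mult:
  fixes g :: "'k::semiring_1^'n^'n"
  assumes "invertible g"
  shows "g ** matrix_inv g = mat 1" "matrix_inv g ** g = mat 1"
proof -
  have "\<exists>g'. g ** g' = mat 1 \<and> g' ** g = mat 1" using assms unfolding invertible_def by blast
  from someI_ex[OF this] show "g ** matrix_inv g = mat 1" "matrix_inv g ** g = mat 1"
    unfolding matrix_inv_def by auto
qed

lemma matrix_inv_unique:
  fixes A B :: "'k::semiring_1^'n^'n"
  assumes "A ** B = mat 1" "B ** A = mat 1"
  shows "matrix_inv A = B"
proof -
  have inv: "invertible A" using assms unfolding invertible_def by blast
  have "matrix_inv A = matrix_inv A ** (A ** B)" using assms by simp
  also have "\<dots> = B" using matrix_inv_mult(2)[OF inv] by (simp add: matrix_mul_assoc)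
  finally show ?thesis .
qed

lemma matrix_diff_ldistrib: "(A::'a::comm_ring_1^'n^'m) ** (B - C) = A ** B - A ** C"
  by (simp add: matrix_matrix_mult_def vec_eq_iff sum_subtractf algebra_simps)

lemma matrix_diff_rdistrib: "((B::'a::comm_ring_1^'n^'m) - C) ** A = B ** A - C ** A"
  by (simp add: matrix_matrix_mult_def vec_eq_iff sum_subtractf algebra_simps)

lemma entry_eq [simp]:
  "entry x 1 1 = x$1$1" "entry x 1 2 = x$1$2" "entry x 1 3 = x$1$3"
  "entry x 2 1 = x$2$1" "entry x 2 2 = x$2$2" "entry x 2 3 = x$2$3"
  "entry x 3 1 = x$3$1" "entry x 3 2 = x$3$2" "entry x 3 3 = x$3$3"
  unfolding entry_def by simp_all

lemma xi_eq [simp]: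
  "xi 1 1 x = x$1$1" "xi 1 2 x = x$1$2" "xi 1 3 x = x$1$3"
  "xi 2 1 x = x$2$1" "xi 2 2 x = x$2$2" "xi 2 3 x = x$2$3"
  "xi 3 1 x = x$3$1" "xi 3 2 x = x$3$2" "xi 3 3 x = x$3$3"
  unfolding xi_def entry_def by simp_all

lemma minor_eq:
  "minor 1 1 x = x$2$2 * x$3$3 - x$2$3 * x$3$2"
  "minor 1 2 x = x$2$1 * x$3$3 - x$2$3 * x$3$1"
  "minor 1 3 x = x$2$1 * x$3$2 - x$2$2 * x$3$1"
  "minor 2 2 x = x$1$1 * x$3$3 - x$1$3 * x$3$1"
  "minor 2 3 x = x$1$1 * x$3$2 - x$1$2 * x$3$1"
  "minor 3 3 x = x$1$1 * x$2$2 - x$1$2 * x$2$1"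
  unfolding minor_def Let_def entry_def by (simp_all add: insert_Diff_if)

text \<open>The simplifier rewrites the index \<open>1 :: nat\<close> to \<open>Suc 0\<close>, hence the primed copies.\<close>

lemmas entry_eq' [simp] = entry_eq(1-4,7)[unfolded One_nat_def]
lemmas xi_eq' [simp] = xi_eq(1-4,7)[unfolded One_nat_def]
lemmas minor_eq' = minor_eq(1-3)[unfolded One_nat_def]

lemma s1_eq: "s1 x = x$1$1 + x$2$2 + x$3$3"
  unfolding s1_def by (simp add: add.assoc)

lemma s2_eq:
  "s2 x = (x$2$2 * x$3$3 - x$2$3 * x$3$2) + (x$1$1 * x$3$3 - x$1$3 * x$3$1) + (x$1$1 * x$2$2 - x$1$2 * x$2$1)"
  unfolding s2_def by (simp add: minor_eq minor_eq' add.assoc)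

lemma s3_eq:
  "s3 x = x$1$1 * x$2$2 * x$3$3 + x$1$2 * x$2$3 * x$3$1 + x$1$3 * x$2$1 * x$3$2
        - x$1$1 * x$2$3 * x$3$2 - x$1$2 * x$2$1 * x$3$3 - x$1$3 * x$2$2 * x$3$1"
  unfolding s3_def by (rule det_3)

lemma d1_eq: "d1 x = x$2$1 * (x$2$1 * x$3$2 - x$2$2 * x$3$1) + x$3$1 * (x$2$1 * x$3$3 - x$2$3 * x$3$1)"
  unfolding d1_def by (simp add: minor_eq minor_eq')

lemma d2_eq: "d2 x = x$3$1 * (x$1$1 * x$3$2 - x$1$2 * x$3$1) + x$3$2 * (x$2$1 * x$3$2 - x$2$2 * x$3$1)"
  unfolding d2_def by (simp add: minor_eq minor_eq')

lemmas generator_eqs = s1_eq s2_eq s3_eq d1_eq d2_eq minor_eq minor_eq'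

lemma generator_relation:
  fixes x :: "'k::comm_ring_1^3^3"
  shows "d1 x * d2 x - minor 1 3 x ^ 3 - xi 3 1 x * minor 1 3 x ^ 2 * s1 x
     - xi 3 1 x ^ 2 * minor 1 3 x * s2 x - xi 3 1 x ^ 3 * s3 x = 0"
  unfolding generator_eqs xi_eq by (simp add: algebra_simps power2_eq_square power3_eq_cube)

subsection \<open>Invariance of the generators\<close>

lemma s1_conj:
  fixes g :: "'k::field^3^3"
  assumes "invertible g"
  shows "s1 (matrix_inv g ** x ** g) = s1 x"
proof -
  have "trace (matrix_inv g ** x ** g) = trace (g ** (matrix_inv g ** x))"
    by (rule trace_mul_sym)
  also have "\<dots> = trace x"
    using matrix_inv_mult(1)[OF assms] by (simp add: matrix_mul_assoc)
  finally show ?thesis by (simp add: s1_eq trace_def sum_3)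
qed

lemma s3_conj:
  fixes g :: "'k::field^3^3"
  assumes "invertible g"
  shows "s3 (matrix_inv g ** x ** g) = s3 x"
proof -
  have "det (matrix_inv g) * det g = 1"
    using matrix_inv_mult(2)[OF assms] by (metis det_I det_mul)
  then show ?thesis unfolding s3_def by (simp add: det_mul)
qed

text \<open>\<open>s2\<close> is read off from \<open>det (1 - x) = 1 - s1 x + s2 x - s3 x\<close>.\<close>

lemma s2_conj:
  fixes g :: "'k::field^3^3"
  assumes "invertible g"
  shows "s2 (matrix_inv g ** x ** g) = s2 x"
proof -
  have det_one_minus: "det (mat 1 - y) = 1 - s1 y + s2 y - s3 y" for y :: "'k^3^3"
    unfolding det_3 s1_eq s2_eq s3_eq by (simp add: mat_def algebra_simps)
  have "det (matrix_inv g) * det g = 1"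
    using matrix_inv_mult(2)[OF assms] by (metis det_I det_mul)
  moreover have "mat 1 - matrix_inv g ** x ** g = matrix_inv g ** (mat 1 - x) ** g"
    by (simp add: matrix_diff_ldistrib matrix_diff_rdistrib matrix_inv_mult[OF assms])
  ultimately have "det (mat 1 - matrix_inv g ** x ** g) = det (mat 1 - x)"
    by (simp add: det_mul)
  then show ?thesis using s1_conj[OF assms, of x] s3_conj[OF assms, of x]
    by (simp add: det_one_minus)
qed

definition unitri :: "'k::comm_ring_1 \<Rightarrow> 'k \<Rightarrow> 'k \<Rightarrow> 'k^3^3" where
  "unitri a b e = mat3 1 a b 0 1 e 0 0 1"

lemma upper_unitri_unitri: "upper_unitri (unitri a b e :: 'k::field^3^3)"
  unfolding upper_unitri_def unitri_def by (simp add: entry_def)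

lemma upper_unitri_eq_unitri:
  fixes u :: "'k::field^3^3"
  assumes "upper_unitri u"
  shows "u = unitri (u$1$2) (u$1$3) (u$2$3)"
proof -
  have "u$2$1 = 0" "u$3$1 = 0" "u$3$2 = 0" "u$1$1 = 1" "u$2$2 = 1" "u$3$3 = 1"
    using assms unfolding upper_unitri_def
    by (auto dest!: bspec[of _ _ 1] bspec[of _ _ 2] bspec[of _ _ 3])
  then show ?thesis unfolding unitri_def by (subst mat3_expand) simp
qed

lemma matrix_inv_unitri: "matrix_inv (unitri a b e :: 'k::field^3^3) = mat3 1 (-a) (a*e - b) 0 1 (-e) 0 0 1"
  by (rule matrix_inv_unique) (simp_all add: unitri_def mat3_mult mat_1_eq_mat3 algebra_simps)

lemma invertible_upper_unitri:
  fixes u :: "'k::field^3^3"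
  assumes "upper_unitri u"
  shows "invertible u"
proof -
  have "unitri a b e ** mat3 1 (-a) (a*e - b) 0 1 (-e) 0 0 1 = (mat 1 :: 'k^3^3)"
       "mat3 1 (-a) (a*e - b) 0 1 (-e) 0 0 1 ** unitri a b e = (mat 1 :: 'k^3^3)" for a b e
    by (simp_all add: unitri_def mat3_mult mat_1_eq_mat3 algebra_simps)
  then show ?thesis
    using upper_unitri_eq_unitri[OF assms] unfolding invertible_def by metis
qed

lemma conj_unitri:
  "matrix_inv (unitri a b e) ** (x::'k::field^3^3) ** unitri a b e =
   mat3 1 (-a) (a*e - b) 0 1 (-e) 0 0 1
     ** mat3 (x$1$1) (x$1$2) (x$1$3) (x$2$1) (x$2$2) (x$2$3) (x$3$1) (x$3$2) (x$3$3)
     ** mat3 1 a b 0 1 e 0 0 1"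
  by (subst mat3_expand[of x]) (simp add: matrix_inv_unitri[unfolded unitri_def] unitri_def)

lemma conj_unitri_invariants:
  fixes x :: "'k::field^3^3" and a b e :: 'k
  defines "y \<equiv> matrix_inv (unitri a b e) ** x ** unitri a b e"
  shows "y$3$1 = x$3$1" "minor 1 3 y = minor 1 3 x" "d1 y = d1 x" "d2 y = d2 x"
  unfolding y_def conj_unitri mat3_mult
  by (simp_all add: minor_eq minor_eq' d1_eq d2_eq) (simp_all add: algebra_simps)

definition gen :: "nat \<Rightarrow> 'k::field^3^3 \<Rightarrow> 'k" where
  "gen = (\<lambda>i. [s1, s2, s3, xi 3 1, minor 1 3, d1, d2] ! i)"

lemma gen_eq [simp]:
  "gen 0 = s1" "gen 1 = s2" "gen 2 = s3" "gen 3 = xi 3 1" "gen 4 = minor 1 3" "gen 5 = d1" "gen 6 = d2"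
  by (simp_all add: gen_def numeral_eq_Suc)

lemmas gen_eq' [simp] = gen_eq(2,4,5)[unfolded One_nat_def]

lemma less_7_cases: "(i::nat) < 7 \<longleftrightarrow> i = 0 \<or> i = 1 \<or> i = 2 \<or> i = 3 \<or> i = 4 \<or> i = 5 \<or> i = 6"
  by auto

lemma gen_conj_upper_unitri:
  fixes u :: "'k::field^3^3"
  assumes "upper_unitri u" "i < 7"
  shows "gen i (matrix_inv u ** x ** u) = gen i x"
  using assms(2) s1_conj s2_conj s3_conj invertible_upper_unitri[OF assms(1)]
    conj_unitri_invariants[of "u$1$2" "u$1$3" "u$2$3" x] upper_unitri_eq_unitri[OF assms(1)]
  unfolding less_7_cases by auto

subsection \<open>Evaluation of formal polynomials\<close>

definition monom_eval :: "(nat \<Rightarrow> 'a \<Rightarrow> 'k::comm_ring_1) \<Rightarrow> (nat \<Rightarrow>\<^sub>0 nat) \<Rightarrow> 'a \<Rightarrow> 'k" where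
  "monom_eval v m x = (\<Prod>i\<in>Poly_Mapping.keys m. v i x ^ Poly_Mapping.lookup m i)"

lemma mpoly_eval_eq_sum_monom:
  "mpoly_eval P v x = (\<Sum>m\<in>Poly_Mapping.keys P. Poly_Mapping.lookup P m * monom_eval v m x)"
  unfolding mpoly_eval_def monom_eval_def by simp

lemma monom_eval_eq_prod:
  assumes "finite S" "Poly_Mapping.keys m \<subseteq> S"
  shows "monom_eval v m x = (\<Prod>i\<in>S. v i x ^ Poly_Mapping.lookup m i)"
  unfolding monom_eval_def
  by (rule prod.mono_neutral_left[OF assms]) (auto simp: in_keys_iff)

lemma mpoly_eval_eq_sum:
  assumes "finite S" "Poly_Mapping.keys P \<subseteq> S"
  shows "mpoly_eval P v x = (\<Sum>m\<in>S. Poly_Mapping.lookup P m * monom_eval v m x)"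
  unfolding mpoly_eval_eq_sum_monom
  by (rule sum.mono_neutral_left[OF assms]) (auto simp: in_keys_iff)

lemma keys_add_nat: "Poly_Mapping.keys (m + l :: 'a \<Rightarrow>\<^sub>0 nat) = Poly_Mapping.keys m \<union> Poly_Mapping.keys l"
  by (auto simp: in_keys_iff lookup_add)

lemma monom_eval_add: "monom_eval v (m + l) x = monom_eval v m x * monom_eval v l x"
proof -
  let ?S = "Poly_Mapping.keys m \<union> Poly_Mapping.keys l"
  have "monom_eval v (m + l) x = (\<Prod>i\<in>?S. v i x ^ Poly_Mapping.lookup (m + l) i)"
    by (rule monom_eval_eq_prod) (auto simp: keys_add_nat)
  also have "\<dots> = (\<Prod>i\<in>?S. v i x ^ Poly_Mapping.lookup m i) * (\<Prod>i\<in>?S. v i x ^ Poly_Mapping.lookup l i)"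
    by (simp add: lookup_add power_add prod.distrib)
  also have "\<dots> = monom_eval v m x * monom_eval v l x"
    using monom_eval_eq_prod[of ?S m v x] monom_eval_eq_prod[of ?S l v x] by simp
  finally show ?thesis .
qed

lemma monom_eval_single: "monom_eval v (Poly_Mapping.single i n) x = v i x ^ n"
  unfolding monom_eval_def by simp

lemma poly_mapping_eq_sum_single:
  "(P :: 'a \<Rightarrow>\<^sub>0 'b::comm_monoid_add) = (\<Sum>m\<in>Poly_Mapping.keys P. Poly_Mapping.single m (Poly_Mapping.lookup P m))"
  by (rule poly_mapping_eqI) (simp add: lookup_sum lookup_single when_def in_keys_iff)

lemma mpoly_eval_zero [simp]: "mpoly_eval 0 v = (\<lambda>x. 0)"
  unfolding mpoly_eval_def by simp

lemma mpoly_eval_single: "mpoly_eval (Poly_Mapping.single m c) v x = c * monom_eval v m x"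
  unfolding mpoly_eval_eq_sum_monom by simp

lemma mpoly_eval_add: "mpoly_eval (P + Q) v x = mpoly_eval P v x + mpoly_eval Q v x"
proof -
  let ?S = "Poly_Mapping.keys P \<union> Poly_Mapping.keys Q"
  have "mpoly_eval (P + Q) v x = (\<Sum>m\<in>?S. Poly_Mapping.lookup (P + Q) m * monom_eval v m x)"
    by (rule mpoly_eval_eq_sum) (auto dest: set_mp[OF keys_add])
  also have "\<dots> = (\<Sum>m\<in>?S. Poly_Mapping.lookup P m * monom_eval v m x)
                + (\<Sum>m\<in>?S. Poly_Mapping.lookup Q m * monom_eval v m x)"
    by (simp add: lookup_add algebra_simps sum.distrib)
  also have "\<dots> = mpoly_eval P v x + mpoly_eval Q v x"
    using mpoly_eval_eq_sum[of ?S P v x] mpoly_eval_eq_sum[of ?S Q v x] by simp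
  finally show ?thesis .
qed

lemma mpoly_eval_sum: "finite S \<Longrightarrow> mpoly_eval (sum f S) v x = (\<Sum>s\<in>S. mpoly_eval (f s) v x)"
  by (induction S rule: finite_induct) (simp_all add: mpoly_eval_add)

lemma mpoly_eval_mult: "mpoly_eval (P * Q) v x = mpoly_eval P v x * mpoly_eval Q v x"
proof -
  have "P * Q = (\<Sum>m\<in>Poly_Mapping.keys P. Poly_Mapping.single m (Poly_Mapping.lookup P m)) *
                (\<Sum>l\<in>Poly_Mapping.keys Q. Poly_Mapping.single l (Poly_Mapping.lookup Q l))"
    by (subst (1) poly_mapping_eq_sum_single, subst (1) poly_mapping_eq_sum_single[of Q]) (rule refl)
  also have "\<dots> = (\<Sum>m\<in>Poly_Mapping.keys P. \<Sum>l\<in>Poly_Mapping.keys Q.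
      Poly_Mapping.single (m + l) (Poly_Mapping.lookup P m * Poly_Mapping.lookup Q l))"
    by (simp add: sum_distrib_left sum_distrib_right mult_single) (rule sum.swap)
  finally have "mpoly_eval (P * Q) v x = (\<Sum>m\<in>Poly_Mapping.keys P. \<Sum>l\<in>Poly_Mapping.keys Q.
      Poly_Mapping.lookup P m * Poly_Mapping.lookup Q l * (monom_eval v m x * monom_eval v l x))"
    by (simp add: mpoly_eval_sum mpoly_eval_single monom_eval_add)
  also have "\<dots> = mpoly_eval P v x * mpoly_eval Q v x"
    unfolding mpoly_eval_eq_sum_monom sum_product by (simp add: ac_simps)
  finally show ?thesis .
qed

lemma mpoly_eval_uminus: "mpoly_eval (- P) v x = - mpoly_eval P v x"
  using mpoly_eval_add[of P "- P" v x] by (simp add: eq_neg_iff_add_eq_0 add.commute)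

lemma mpoly_eval_diff: "mpoly_eval (P - Q) v x = mpoly_eval P v x - mpoly_eval Q v x"
  using mpoly_eval_add[of P "- Q" v x] by (simp add: mpoly_eval_uminus)

lemma mpoly_eval_const: "mpoly_eval (Poly_Mapping.single 0 c) v x = c"
  by (simp add: mpoly_eval_single monom_eval_def)

lemma mpoly_eval_one [simp]: "mpoly_eval 1 v x = 1"
  using mpoly_eval_const[of 1 v x] by simp

lemma mpoly_eval_power: "mpoly_eval (P ^ n) v x = mpoly_eval P v x ^ n"
  by (induction n) (simp_all add: mpoly_eval_mult)

lemma mpoly_eval_mvar: "mpoly_eval (mvar i) v x = v i x"
  unfolding mvar_def by (simp add: mpoly_eval_single monom_eval_single)

lemmas mpoly_eval_simps = mpoly_eval_add mpoly_eval_mult mpoly_eval_diff mpoly_eval_uminus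
  mpoly_eval_power mpoly_eval_mvar mpoly_eval_const

lemma mpoly_vars_in_zero [simp]: "mpoly_vars_in V 0"
  unfolding mpoly_vars_in_def by simp

lemma mpoly_vars_in_single: "Poly_Mapping.keys m \<subseteq> V \<Longrightarrow> mpoly_vars_in V (Poly_Mapping.single m c)"
  unfolding mpoly_vars_in_def by simp

lemma mpoly_vars_in_mvar: "i \<in> V \<Longrightarrow> mpoly_vars_in V (mvar i)"
  unfolding mpoly_vars_in_def mvar_def by simp

lemma mpoly_vars_in_add: "mpoly_vars_in V P \<Longrightarrow> mpoly_vars_in V Q \<Longrightarrow> mpoly_vars_in V (P + Q)"
  unfolding mpoly_vars_in_def using keys_add[of P Q] by blast

lemma mpoly_vars_in_uminus: "mpoly_vars_in V (P::'k::comm_ring_1 mpoly) \<Longrightarrow> mpoly_vars_in V (- P)"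
  unfolding mpoly_vars_in_def by simp

lemma mpoly_vars_in_diff:
  "mpoly_vars_in V (P::'k::comm_ring_1 mpoly) \<Longrightarrow> mpoly_vars_in V Q \<Longrightarrow> mpoly_vars_in V (P - Q)"
  using mpoly_vars_in_add[of V P "- Q"] mpoly_vars_in_uminus[of V Q] by simp

lemma mpoly_vars_in_mult: "mpoly_vars_in V P \<Longrightarrow> mpoly_vars_in V Q \<Longrightarrow> mpoly_vars_in V (P * Q)"
  unfolding mpoly_vars_in_def
proof (intro ballI)
  fix m assume P: "\<forall>m\<in>Poly_Mapping.keys P. Poly_Mapping.keys m \<subseteq> V"
    and Q: "\<forall>m\<in>Poly_Mapping.keys Q. Poly_Mapping.keys m \<subseteq> V"
    and "m \<in> Poly_Mapping.keys (P * Q)"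
  then obtain a b where "m = a + b" "a \<in> Poly_Mapping.keys P" "b \<in> Poly_Mapping.keys Q"
    using keys_mult[of P Q] by blast
  then show "Poly_Mapping.keys m \<subseteq> V" using P Q by (auto simp: keys_add_nat)
qed

lemma mpoly_vars_in_power: "mpoly_vars_in V P \<Longrightarrow> mpoly_vars_in V (P ^ n)"
  by (induction n) (simp_all add: mpoly_vars_in_mult, simp add: mpoly_vars_in_def)

lemma mpoly_vars_in_sum:
  "finite S \<Longrightarrow> (\<And>s. s \<in> S \<Longrightarrow> mpoly_vars_in V (f s)) \<Longrightarrow> mpoly_vars_in V (sum f S)"
  by (induction S rule: finite_induct) (simp_all add: mpoly_vars_in_add)

lemma mpoly_vars_in_keys: "mpoly_vars_in V P \<Longrightarrow> m \<in> Poly_Mapping.keys P \<Longrightarrow> Poly_Mapping.keys m \<subseteq> V"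
  unfolding mpoly_vars_in_def by blast

lemma mpoly_vars_in_subset:
  "mpoly_vars_in V P \<Longrightarrow> Poly_Mapping.keys Q \<subseteq> Poly_Mapping.keys P \<Longrightarrow> mpoly_vars_in V Q"
  unfolding mpoly_vars_in_def by blast

subsection \<open>Polynomial functions and generated subalgebras\<close>

lemma poly_fun_diff:
  assumes "f \<in> poly_fun" "g \<in> poly_fun"
  shows "(\<lambda>x. f x - g x) \<in> poly_fun"
proof -
  have "(\<lambda>x. f x + (\<lambda>x. -1) x * g x) \<in> poly_fun"
    by (intro pf_add pf_mult pf_const assms)
  then show ?thesis by simp
qed

lemma poly_fun_power: "f \<in> poly_fun \<Longrightarrow> (\<lambda>x. f x ^ n) \<in> poly_fun"
proof (induction n)
  case (Suc n)
  then have "(\<lambda>x. f x * f x ^ n) \<in> poly_fun" by (intro pf_mult)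
  then show ?case by simp
qed (use pf_const[of 1] in simp)

lemma poly_fun_sum:
  "finite S \<Longrightarrow> (\<And>s. s \<in> S \<Longrightarrow> f s \<in> poly_fun) \<Longrightarrow> (\<lambda>x. \<Sum>s\<in>S. f s x) \<in> poly_fun"
proof (induction S rule: finite_induct)
  case (insert a S)
  then have "(\<lambda>x. f a x + (\<Sum>s\<in>S. f s x)) \<in> poly_fun" by (intro pf_add) auto
  with insert show ?case by simp
qed (use pf_const[of 0] in simp)

lemma poly_fun_prod:
  "finite S \<Longrightarrow> (\<And>s. s \<in> S \<Longrightarrow> f s \<in> poly_fun) \<Longrightarrow> (\<lambda>x. \<Prod>s\<in>S. f s x) \<in> poly_fun"
proof (induction S rule: finite_induct)
  case (insert a S)
  then have "(\<lambda>x. f a x * (\<Prod>s\<in>S. f s x)) \<in> poly_fun" by (intro pf_mult) auto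
  with insert show ?case by simp
qed (use pf_const[of 1] in simp)

lemmas poly_fun_intros = pf_const pf_coord pf_add pf_mult poly_fun_diff poly_fun_power

lemma subalg_gen_power: "f \<in> subalg_gen S \<Longrightarrow> (\<lambda>x. f x ^ n) \<in> subalg_gen S"
proof (induction n)
  case (Suc n)
  then have "(\<lambda>x. f x * f x ^ n) \<in> subalg_gen S" by (intro sg_mult)
  then show ?case by simp
qed (use sg_const[of 1] in simp)

lemma subalg_gen_sum:
  "finite I \<Longrightarrow> (\<And>s. s \<in> I \<Longrightarrow> f s \<in> subalg_gen S) \<Longrightarrow> (\<lambda>x. \<Sum>s\<in>I. f s x) \<in> subalg_gen S"
proof (induction I rule: finite_induct)
  case (insert a I)
  then have "(\<lambda>x. f a x + (\<Sum>s\<in>I. f s x)) \<in> subalg_gen S" by (intro sg_add) auto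
  with insert show ?case by simp
qed (use sg_const[of 0] in simp)

lemma subalg_gen_prod:
  "finite I \<Longrightarrow> (\<And>s. s \<in> I \<Longrightarrow> f s \<in> subalg_gen S) \<Longrightarrow> (\<lambda>x. \<Prod>s\<in>I. f s x) \<in> subalg_gen S"
proof (induction I rule: finite_induct)
  case (insert a I)
  then have "(\<lambda>x. f a x * (\<Prod>s\<in>I. f s x)) \<in> subalg_gen S" by (intro sg_mult) auto
  with insert show ?case by simp
qed (use sg_const[of 1] in simp)

subsection \<open>Polynomial identities\<close>

definition alg_closed_field :: "'k::field itself \<Rightarrow> bool" where
  "alg_closed_field _ \<longleftrightarrow> (\<forall>p :: 'k poly. degree p \<noteq> 0 \<longrightarrow> (\<exists>z. poly p z = 0))"

lemma alg_closed_field_infinite: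
  assumes "alg_closed_field TYPE('k::field)"
  shows "infinite (UNIV :: 'k set)"
proof
  assume fin: "finite (UNIV :: 'k set)"
  define q :: "'k poly" where "q = (\<Prod>a\<in>UNIV. [:-a, 1:])"
  have "degree q = card (UNIV :: 'k set)"
    unfolding q_def by (subst degree_prod_eq_sum_degree) (auto simp: fin)
  then have dq: "degree q \<noteq> 0" using fin by simp
  then have "degree (q + 1) \<noteq> 0" by (simp add: degree_add_eq_left)
  then obtain z where "poly (q + 1) z = 0"
    using assms unfolding alg_closed_field_def by metis
  moreover have "poly q z = 0"
    unfolding q_def poly_prod by (rule prod_zero) (use fin in auto)
  ultimately show False by simp
qed

lemma alg_closed_field_elementary_symmetric:
  assumes "alg_closed_field TYPE('k::field)"
  shows "\<exists>u v w::'k. u + v + w = e1 \<and> u * v + v * w + u * w = e2 \<and> u * v * w = e3"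
proof -
  have "degree [:-e3, e2, -e1, 1::'k:] = 3" by simp
  then obtain u where u: "poly [:-e3, e2, -e1, 1::'k:] u = 0"
    using assms unfolding alg_closed_field_def by (metis zero_neq_numeral)
  have "degree [:e2 - u * e1 + u * u, u - e1, 1::'k:] = 2" by simp
  then obtain v where v: "poly [:e2 - u * e1 + u * u, u - e1, 1::'k:] v = 0"
    using assms unfolding alg_closed_field_def by (metis zero_neq_numeral)
  define w where "w = e1 - u - v"
  have v': "v * v + (u - e1) * v + (e2 - u * e1 + u * u) = 0" using v by (simp add: algebra_simps)
  have "u * v + v * w + u * w = e2"
  proof -
    have "u * v + v * w + u * w - e2 = - (v * v + (u - e1) * v + (e2 - u * e1 + u * u))"
      unfolding w_def by (simp add: algebra_simps)
    then show ?thesis using v' by simp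
  qed
  moreover have "u * v * w = e3"
  proof -
    have "u * v * w - e3 = - u * (v * v + (u - e1) * v + (e2 - u * e1 + u * u))
        + (u * u * u - e1 * u * u + e2 * u - e3)"
      unfolding w_def by (simp add: algebra_simps)
    moreover have "u * u * u - e1 * u * u + e2 * u - e3 = 0" using u by (simp add: algebra_simps)
    ultimately show ?thesis using v' by simp
  qed
  moreover have "u + v + w = e1" unfolding w_def by simp
  ultimately show ?thesis by blast
qed

lemma poly_eq_0_if_vanishes_on_infinite:
  fixes p :: "'k::field poly"
  assumes "infinite D" "\<forall>t\<in>D. poly p t = 0"
  shows "p = 0"
  using assms poly_roots_finite[of p] finite_subset[of D "{t. poly p t = 0}"] by auto

lemma sum_regroup_by:
  fixes g :: "'m \<Rightarrow> 'k::comm_ring_1"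
  assumes "finite S" "finite K" "\<phi> ` K \<subseteq> S"
  shows "(\<Sum>e\<in>S. (\<Sum>m\<in>{m\<in>K. \<phi> m = e}. g m) * w e) = (\<Sum>m\<in>K. g m * w (\<phi> m))"
proof -
  have "(\<Sum>e\<in>S. (\<Sum>m\<in>{m\<in>K. \<phi> m = e}. g m) * w e) = (\<Sum>e\<in>S. \<Sum>m\<in>K. if \<phi> m = e then g m * w e else 0)"
    using assms(2) by (intro sum.cong refl) (simp add: sum_distrib_right sum.inter_filter[symmetric])
  also have "\<dots> = (\<Sum>m\<in>K. \<Sum>e\<in>S. if \<phi> m = e then g m * w e else 0)"
    by (rule sum.swap)
  also have "\<dots> = (\<Sum>m\<in>K. g m * w (\<phi> m))"
    using assms by (intro sum.cong refl) auto
  finally show ?thesis .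
qed

lemma coeffs_eq_0_if_vanishes_on_infinite:
  fixes F :: "'e \<Rightarrow> 'k::field"
  assumes "infinite D" "finite S" "\<forall>t\<in>D. (\<Sum>e\<in>S. F e * t ^ h e) = 0"
  shows "(\<Sum>e\<in>{e\<in>S. h e = k}. F e) = 0"
proof -
  define N where "N = Max (h ` S)"
  have hN: "h ` S \<subseteq> {..N}" unfolding N_def using assms(2) by auto
  define p where "p = (\<Sum>k\<le>N. monom (\<Sum>e\<in>{e\<in>S. h e = k}. F e) k)"
  have "poly p t = (\<Sum>e\<in>S. F e * t ^ h e)" for t
    unfolding p_def poly_sum poly_monom using sum_regroup_by[OF _ assms(2) hN] by simp
  then have "p = 0" using poly_eq_0_if_vanishes_on_infinite[OF assms(1)] assms(3) by simp
  show ?thesis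
  proof (cases "k \<in> h ` S")
    case True
    then have "k \<le> N" using hN by auto
    then show ?thesis using \<open>p = 0\<close> arg_cong[of p 0 "\<lambda>p. coeff p k"]
      unfolding p_def coeff_sum coeff_monom by (simp add: when_def)
  next
    case False
    then show ?thesis by (intro sum.neutral) auto
  qed
qed

text \<open>Induction on \<open>n\<close>: the last variable is separated with the one-variable case.\<close>

lemma coeffs_eq_0_if_vanishes_on_grid:
  fixes a :: "(nat \<Rightarrow> nat) \<Rightarrow> 'k::field"
  assumes D: "infinite D"
  shows "finite S \<Longrightarrow> (\<forall>e\<in>S. \<forall>e'\<in>S. (\<forall>i<n. e i = e' i) \<longrightarrow> e = e') \<Longrightarrow>
    (\<forall>z. (\<forall>i<n. z i \<in> D) \<longrightarrow> (\<Sum>e\<in>S. a e * (\<Prod>i<n. z i ^ e i)) = 0) \<Longrightarrow> \<forall>e\<in>S. a e = 0"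
proof (induction n arbitrary: S)
  case 0
  show ?case
  proof
    fix e assume "e \<in> S"
    then have "S = {e}" using "0.prems"(2) by auto
    then show "a e = 0" using "0.prems"(3) by simp
  qed
next
  case (Suc n)
  show ?case
  proof
    fix e0 assume e0: "e0 \<in> S"
    define S0 where "S0 = {e\<in>S. e n = e0 n}"
    have "\<forall>e\<in>S0. \<forall>e'\<in>S0. (\<forall>i<n. e i = e' i) \<longrightarrow> e = e'"
      using Suc.prems(2) unfolding S0_def by (metis (mono_tags, lifting) less_Suc_eq mem_Collect_eq)
    moreover have "\<forall>z. (\<forall>i<n. z i \<in> D) \<longrightarrow> (\<Sum>e\<in>S0. a e * (\<Prod>i<n. z i ^ e i)) = 0"
    proof (intro allI impI)
      fix z :: "nat \<Rightarrow> 'k" assume z: "\<forall>i<n. z i \<in> D"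
      have "\<forall>t\<in>D. (\<Sum>e\<in>S. a e * (\<Prod>i<n. z i ^ e i) * t ^ e n) = 0"
      proof
        fix t assume t: "t \<in> D"
        have "\<forall>i<Suc n. (z(n := t)) i \<in> D" using z t by (auto simp: less_Suc_eq)
        then have "(\<Sum>e\<in>S. a e * (\<Prod>i<Suc n. (z(n := t)) i ^ e i)) = 0" using Suc.prems(3) by blast
        then show "(\<Sum>e\<in>S. a e * (\<Prod>i<n. z i ^ e i) * t ^ e n) = 0"
          by (simp add: mult.assoc)
      qed
      then show "(\<Sum>e\<in>S0. a e * (\<Prod>i<n. z i ^ e i)) = 0"
        unfolding S0_def by (rule coeffs_eq_0_if_vanishes_on_infinite[OF D Suc.prems(1)])
    qed
    ultimately have "\<forall>e\<in>S0. a e = 0" using Suc.IH[of S0] Suc.prems(1) unfolding S0_def by simp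
    then show "a e0 = 0" using e0 unfolding S0_def by simp
  qed
qed

lemma poly_fun_on_line:
  fixes f :: "'k::comm_ring_1^3^3 \<Rightarrow> 'k"
  assumes "f \<in> poly_fun"
  shows "\<exists>p. \<forall>t. f (\<chi> i j. a$i$j + t * b$i$j) = poly p t"
  using assms
proof (induction rule: poly_fun.induct)
  case (pf_const c)
  then show ?case by (intro exI[of _ "[:c:]"]) simp
next
  case (pf_coord i j)
  then show ?case by (intro exI[of _ "[:a$i$j, b$i$j:]"]) (simp add: mult.commute)
next
  case (pf_add f g)
  then obtain p q where "\<forall>t. f (\<chi> i j. a$i$j + t * b$i$j) = poly p t" "\<forall>t. g (\<chi> i j. a$i$j + t * b$i$j) = poly q t"
    by blast
  then show ?case by (intro exI[of _ "p + q"]) simp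
next
  case (pf_mult f g)
  then obtain p q where "\<forall>t. f (\<chi> i j. a$i$j + t * b$i$j) = poly p t" "\<forall>t. g (\<chi> i j. a$i$j + t * b$i$j) = poly q t"
    by blast
  then show ?case by (intro exI[of _ "p * q"]) simp
qed

text \<open>Restricting to the line through \<open>x\<^sub>0\<close> and \<open>x\<close> reduces this to one variable.\<close>

lemma poly_fun_eq_0_if_mult_eq_0:
  fixes f g :: "'k::field^3^3 \<Rightarrow> 'k"
  assumes inf: "infinite (UNIV :: 'k set)"
    and f: "f \<in> poly_fun" and g: "g \<in> poly_fun" and fg: "\<forall>x. f x * g x = 0" and x0: "g x0 \<noteq> 0"
  shows "f = (\<lambda>x. 0)"
proof
  fix x
  define L where "L t = (\<chi> i j. x0$i$j + t * (x$i$j - x0$i$j))" for t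
  obtain p q where p: "\<forall>t. f (L t) = poly p t" and q: "\<forall>t. g (L t) = poly q t"
    using poly_fun_on_line[OF f, of x0 "\<chi> i j. x$i$j - x0$i$j"]
      poly_fun_on_line[OF g, of x0 "\<chi> i j. x$i$j - x0$i$j"] unfolding L_def by auto
  have "p * q = 0"
  proof (rule poly_eq_0_if_vanishes_on_infinite[OF inf])
    show "\<forall>t\<in>UNIV. poly (p * q) t = 0" using fg p q by (metis poly_mult)
  qed
  moreover have "L 0 = x0" "L 1 = x" unfolding L_def by (simp_all add: vec_eq_iff)
  ultimately have "p = 0" using q x0 by (metis mult_eq_0_iff poly_0)
  then show "f x = 0" using p \<open>L 1 = x\<close> by (metis poly_0)
qed

lemma poly_fun_eq_0_if_vanishes_off_xi31:
  fixes f :: "'k::field^3^3 \<Rightarrow> 'k"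
  assumes "infinite (UNIV :: 'k set)" "f \<in> poly_fun" "\<forall>x. x$3$1 \<noteq> 0 \<longrightarrow> f x = 0"
  shows "f = (\<lambda>x. 0)"
proof (rule poly_fun_eq_0_if_mult_eq_0[OF assms(1,2) pf_coord])
  show "\<forall>x. f x * x$3$1 = 0" using assms(3) by auto
  show "(\<chi> i j. if i = 3 \<and> j = 1 then (1::'k) else 0) $ 3 $ 1 \<noteq> 0" by simp
qed

lemma gen_poly_fun:
  assumes "i < 7"
  shows "(gen i :: 'k::field^3^3 \<Rightarrow> 'k) \<in> poly_fun"
proof -
  have eqs: "s1 = (\<lambda>x::'k^3^3. x$1$1 + x$2$2 + x$3$3)"
    "s2 = (\<lambda>x::'k^3^3. (x$2$2 * x$3$3 - x$2$3 * x$3$2) + (x$1$1 * x$3$3 - x$1$3 * x$3$1)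
                       + (x$1$1 * x$2$2 - x$1$2 * x$2$1))"
    "s3 = (\<lambda>x::'k^3^3. x$1$1 * x$2$2 * x$3$3 + x$1$2 * x$2$3 * x$3$1 + x$1$3 * x$2$1 * x$3$2
                       - x$1$1 * x$2$3 * x$3$2 - x$1$2 * x$2$1 * x$3$3 - x$1$3 * x$2$2 * x$3$1)"
    "xi 3 1 = (\<lambda>x::'k^3^3. x$3$1)"
    "minor 1 3 = (\<lambda>x::'k^3^3. x$2$1 * x$3$2 - x$2$2 * x$3$1)"
    "d1 = (\<lambda>x::'k^3^3. x$2$1 * (x$2$1 * x$3$2 - x$2$2 * x$3$1) + x$3$1 * (x$2$1 * x$3$3 - x$2$3 * x$3$1))"
    "d2 = (\<lambda>x::'k^3^3. x$3$1 * (x$1$1 * x$3$2 - x$1$2 * x$3$1) + x$3$2 * (x$2$1 * x$3$2 - x$2$2 * x$3$1))"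
    by (simp_all add: fun_eq_iff generator_eqs)
  from assms show ?thesis
    unfolding less_7_cases by (elim disjE) (simp only: gen_eq eqs, intro poly_fun_intros)+
qed

lemma mpoly_eval_gen_poly_fun:
  assumes "mpoly_vars_in {0..<7} P"
  shows "mpoly_eval P gen \<in> (poly_fun :: ('k::field^3^3 \<Rightarrow> 'k) set)"
proof -
  have "(\<lambda>x. \<Prod>i\<in>Poly_Mapping.keys m. gen i x ^ Poly_Mapping.lookup m i) \<in> (poly_fun :: ('k^3^3 \<Rightarrow> 'k) set)"
    if "m \<in> Poly_Mapping.keys P" for m
    using mpoly_vars_in_keys[OF assms that] by (intro poly_fun_prod poly_fun_power gen_poly_fun) auto
  then have "(\<lambda>x. \<Sum>m\<in>Poly_Mapping.keys P. Poly_Mapping.lookup P m * monom_eval gen m x) \<in> (poly_fun :: ('k^3^3 \<Rightarrow> 'k) set)"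
    unfolding monom_eval_def by (intro poly_fun_sum pf_mult pf_const) auto
  then show ?thesis unfolding mpoly_eval_eq_sum_monom[abs_def] .
qed

abbreviation gen_alg :: "('k::field^3^3 \<Rightarrow> 'k) set" where
  "gen_alg \<equiv> subalg_gen (gen ` {0..<7})"

lemma gen_alg_iff: "f \<in> gen_alg \<longleftrightarrow> (\<exists>P. mpoly_vars_in {0..<7} P \<and> f = mpoly_eval P gen)"
proof
  assume "f \<in> gen_alg"
  then show "\<exists>P. mpoly_vars_in {0..<7} P \<and> f = mpoly_eval P gen"
  proof (induction rule: subalg_gen.induct)
    case (sg_const c)
    show ?case
      by (intro exI[of _ "Poly_Mapping.single 0 c"] conjI mpoly_vars_in_single ext)
         (simp_all add: mpoly_eval_const)
  next
    case (sg_gen f)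
    then obtain i where "i < 7" "f = gen i" by auto
    then show ?case by (intro exI[of _ "mvar i"] conjI mpoly_vars_in_mvar ext) (simp_all add: mpoly_eval_mvar)
  next
    case (sg_add f g)
    then obtain P Q where "mpoly_vars_in {0..<7} P" "f = mpoly_eval P gen" "mpoly_vars_in {0..<7} Q" "g = mpoly_eval Q gen"
      by blast
    then show ?case by (intro exI[of _ "P + Q"] conjI mpoly_vars_in_add ext) (simp_all add: mpoly_eval_add)
  next
    case (sg_mult f g)
    then obtain P Q where "mpoly_vars_in {0..<7} P" "f = mpoly_eval P gen" "mpoly_vars_in {0..<7} Q" "g = mpoly_eval Q gen"
      by blast
    then show ?case by (intro exI[of _ "P * Q"] conjI mpoly_vars_in_mult ext) (simp_all add: mpoly_eval_mult)
  qed
next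
  assume "\<exists>P. mpoly_vars_in {0..<7} P \<and> f = mpoly_eval P gen"
  then obtain P where P: "mpoly_vars_in {0..<7} P" "f = mpoly_eval P gen" by blast
  have "(\<lambda>x. \<Prod>i\<in>Poly_Mapping.keys m. gen i x ^ Poly_Mapping.lookup m i) \<in> gen_alg"
    if "m \<in> Poly_Mapping.keys P" for m
    using mpoly_vars_in_keys[OF P(1) that] by (intro subalg_gen_prod subalg_gen_power sg_gen) auto
  then have "(\<lambda>x. \<Sum>m\<in>Poly_Mapping.keys P. Poly_Mapping.lookup P m * monom_eval gen m x) \<in> gen_alg"
    unfolding monom_eval_def by (intro subalg_gen_sum sg_mult sg_const) auto
  then show "f \<in> gen_alg" unfolding P(2) mpoly_eval_eq_sum_monom[abs_def] .
qed

lemma gen_alg_subset_inv_U: "(gen_alg :: ('k::field^3^3 \<Rightarrow> 'k) set) \<subseteq> inv_U"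
proof
  fix f :: "'k^3^3 \<Rightarrow> 'k" assume "f \<in> gen_alg"
  then show "f \<in> inv_U"
  proof (induction rule: subalg_gen.induct)
    case (sg_const c)
    then show ?case unfolding inv_U_def act_def by (simp add: pf_const)
  next
    case (sg_gen f)
    then show ?case
      using gen_poly_fun gen_conj_upper_unitri unfolding inv_U_def act_def by (auto simp: fun_eq_iff)
  next
    case (sg_add f g)
    then show ?case unfolding inv_U_def act_def by (auto intro: pf_add simp: fun_eq_iff)
  next
    case (sg_mult f g)
    then show ?case unfolding inv_U_def act_def by (auto intro: pf_mult simp: fun_eq_iff)
  qed
qed

lemma inv_U_conj: "f \<in> inv_U \<Longrightarrow> upper_unitri u \<Longrightarrow> f (matrix_inv u ** x ** u) = f x"
  unfolding inv_U_def act_def by (auto simp: fun_eq_iff)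

subsection \<open>Reduction modulo the relation\<close>

definition relation_R :: "'k::comm_ring_1 mpoly" where
  "relation_R = mvar 5 * mvar 6 - mvar 4 ^ 3 - mvar 3 * mvar 4 ^ 2 * mvar 0
     - mvar 3 ^ 2 * mvar 4 * mvar 1 - mvar 3 ^ 3 * mvar 2"

lemma mpoly_eval_relation_R: "mpoly_eval relation_R gen x = 0"
  unfolding relation_R_def mpoly_eval_diff mpoly_eval_mult mpoly_eval_power mpoly_eval_mvar gen_eq
  by (rule generator_relation)

lemma mpoly_vars_in_relation_R: "mpoly_vars_in {0..<7} relation_R"
  unfolding relation_R_def
  by (intro mpoly_vars_in_diff mpoly_vars_in_mult mpoly_vars_in_power mpoly_vars_in_mvar; simp)

definition reduced :: "'k::zero mpoly \<Rightarrow> bool" where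
  "reduced P \<longleftrightarrow> (\<forall>m\<in>Poly_Mapping.keys P. Poly_Mapping.lookup m 5 = 0 \<or> Poly_Mapping.lookup m 6 = 0)"

lemma reduced_add: "reduced P \<Longrightarrow> reduced Q \<Longrightarrow> reduced (P + Q)"
  unfolding reduced_def using keys_add[of P Q] by (meson Un_iff subsetD)

lemma reduced_sum: "finite S \<Longrightarrow> (\<And>s. s \<in> S \<Longrightarrow> reduced (f s)) \<Longrightarrow> reduced (sum f S)"
proof (induction S rule: finite_induct)
  case (insert a S)
  then have "reduced (f a + sum f S)" by (intro reduced_add) auto
  with insert show ?case by simp
qed (simp add: reduced_def)

lemma reduced_single:
  "Poly_Mapping.lookup m 5 = 0 \<or> Poly_Mapping.lookup m 6 = 0 \<Longrightarrow> reduced (Poly_Mapping.single m c)"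
  unfolding reduced_def by simp

lemma reduced_subset: "reduced P \<Longrightarrow> Poly_Mapping.keys Q \<subseteq> Poly_Mapping.keys P \<Longrightarrow> reduced Q"
  unfolding reduced_def by (meson subsetD)

abbreviation sg :: "nat \<Rightarrow> nat \<Rightarrow> nat \<Rightarrow>\<^sub>0 nat" where
  "sg \<equiv> Poly_Mapping.single"

lemma mvar_power: "mvar i ^ k = Poly_Mapping.single (sg i k) (1::'k::comm_ring_1)"
proof (induction k)
  case (Suc k)
  have "mvar i ^ Suc k = mvar i ^ k * mvar i"
    by (rule power_Suc2)
  also have "\<dots> = Poly_Mapping.single (sg i k) (1::'k) * Poly_Mapping.single (sg i 1) 1"
    by (subst Suc.IH) (simp only: mvar_def)
  also have "\<dots> = Poly_Mapping.single (sg i k + sg i 1) 1"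
    by (simp only: mult_single mult_1)
  also have "\<dots> = Poly_Mapping.single (sg i (Suc k)) 1"
    by (simp only: single_add[symmetric] Suc_eq_plus1)
  finally show ?case .
qed simp

lemma relation_R_eq:
  "relation_R = Poly_Mapping.single (sg 5 1 + sg 6 1) 1 - (Poly_Mapping.single (sg 4 3) 1
     + Poly_Mapping.single (sg 3 1 + sg 4 2 + sg 0 1) 1 + Poly_Mapping.single (sg 3 2 + sg 4 1 + sg 1 1) 1
     + Poly_Mapping.single (sg 3 3 + sg 2 1) (1::'k::comm_ring_1))"
  unfolding relation_R_def mvar_power by (simp add: mvar_def mult_single algebra_simps)

definition reducible :: "'k::comm_ring_1 mpoly \<Rightarrow> bool" where
  "reducible P \<longleftrightarrow> (\<exists>Q B. P = Q * relation_R + B \<and> mpoly_vars_in {0..<7} Q \<and> mpoly_vars_in {0..<7} B \<and> reduced B)"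

lemma reducible_add:
  assumes "reducible P" "reducible P'"
  shows "reducible (P + P')"
proof -
  obtain Q B Q' B' where "P = Q * relation_R + B" "mpoly_vars_in {0..<7} Q" "mpoly_vars_in {0..<7} B" "reduced B"
    "P' = Q' * relation_R + B'" "mpoly_vars_in {0..<7} Q'" "mpoly_vars_in {0..<7} B'" "reduced B'"
    using assms unfolding reducible_def by blast
  then show ?thesis unfolding reducible_def
    by (intro exI[of _ "Q + Q'"] exI[of _ "B + B'"]) (simp add: algebra_simps mpoly_vars_in_add reduced_add)
qed

lemma reducible_sum: "finite S \<Longrightarrow> (\<And>s. s \<in> S \<Longrightarrow> reducible (f s)) \<Longrightarrow> reducible (sum f S)"
proof (induction S rule: finite_induct)
  case empty
  show ?case unfolding reducible_def by (intro exI[of _ 0]) (simp add: reduced_def)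
qed (simp add: reducible_add)

text \<open>Rewriting \<open>Y\<^sub>5 Y\<^sub>6\<close> by the other terms of the relation strictly lowers the degree in \<open>Y\<^sub>5\<close>.\<close>

lemma reducible_monomial:
  fixes c :: "'k::comm_ring_1"
  shows "Poly_Mapping.keys m \<subseteq> {0..<7} \<Longrightarrow> reducible (Poly_Mapping.single m c)"
proof (induction "Poly_Mapping.lookup m 5" arbitrary: m rule: less_induct)
  case less
  show ?case
  proof (cases "Poly_Mapping.lookup m 5 = 0 \<or> Poly_Mapping.lookup m 6 = 0")
    case True
    then show ?thesis unfolding reducible_def
      by (intro exI[of _ 0] exI[of _ "Poly_Mapping.single m c"])
         (simp add: reduced_single mpoly_vars_in_single less.prems)
  next
    case False
    define m' where "m' = m - (sg 5 1 + sg 6 1)"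
    have m: "m = m' + (sg 5 1 + sg 6 1)"
      unfolding m'_def using False
      by (intro poly_mapping_eqI) (auto simp: lookup_add lookup_minus lookup_single when_def)
    have keys_m': "Poly_Mapping.keys m' \<subseteq> {0..<7}" using less.prems unfolding m by (auto simp: keys_add_nat)
    have IH: "reducible (Poly_Mapping.single (m' + t) c)"
      if "Poly_Mapping.lookup t 5 = 0" "Poly_Mapping.keys t \<subseteq> {0..<7}" for t
    proof (rule less.hyps)
      show "Poly_Mapping.lookup (m' + t) 5 < Poly_Mapping.lookup m 5"
        using False that(1) unfolding m by (simp add: lookup_add)
      show "Poly_Mapping.keys (m' + t) \<subseteq> {0..<7}"
        using keys_m' that(2) by (simp add: keys_add_nat)
    qed
    have "reducible (Poly_Mapping.single m' c * relation_R)"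
      unfolding reducible_def using keys_m'
      by (intro exI[of _ "Poly_Mapping.single m' c"] exI[of _ 0]) (simp add: mpoly_vars_in_single reduced_def)
    moreover have "Poly_Mapping.single m c = Poly_Mapping.single m' c * relation_R
        + Poly_Mapping.single (m' + sg 4 3) c + Poly_Mapping.single (m' + (sg 3 1 + sg 4 2 + sg 0 1)) c
        + Poly_Mapping.single (m' + (sg 3 2 + sg 4 1 + sg 1 1)) c + Poly_Mapping.single (m' + (sg 3 3 + sg 2 1)) c"
      unfolding m relation_R_eq by (simp add: algebra_simps mult_single)
    ultimately show ?thesis
      by (simp only:) (intro reducible_add IH; simp add: lookup_add lookup_single keys_add_nat)
  qed
qed

lemma reduce_mod_relation:
  fixes P :: "'k::comm_ring_1 mpoly"
  assumes "mpoly_vars_in {0..<7} P"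
  obtains Q B where "P = Q * relation_R + B" "mpoly_vars_in {0..<7} Q" "mpoly_vars_in {0..<7} B" "reduced B"
proof -
  have "reducible (\<Sum>m\<in>Poly_Mapping.keys P. Poly_Mapping.single m (Poly_Mapping.lookup P m))"
    using assms by (intro reducible_sum reducible_monomial) (auto simp: mpoly_vars_in_def)
  then show ?thesis
    using that unfolding reducible_def poly_mapping_eq_sum_single[of P, symmetric] by blast
qed

lemma monom_eval_gen_eq:
  assumes "Poly_Mapping.keys m \<subseteq> {0..<7}"
  shows "monom_eval gen m (x::'k::field^3^3) =
    s1 x ^ Poly_Mapping.lookup m 0 * s2 x ^ Poly_Mapping.lookup m 1 * s3 x ^ Poly_Mapping.lookup m 2
    * x$3$1 ^ Poly_Mapping.lookup m 3 * minor 1 3 x ^ Poly_Mapping.lookup m 4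
    * d1 x ^ Poly_Mapping.lookup m 5 * d2 x ^ Poly_Mapping.lookup m 6"
proof -
  have "{..<7::nat} = {0,1,2,3,4,5,6}" by auto
  moreover have "monom_eval gen m x = (\<Prod>i<7. gen i x ^ Poly_Mapping.lookup m i)"
    by (rule monom_eval_eq_prod) (use assms in auto)
  ultimately show ?thesis by (simp add: mult_ac)
qed

definition mpoly_filter :: "((nat \<Rightarrow>\<^sub>0 nat) \<Rightarrow> bool) \<Rightarrow> 'k::comm_monoid_add mpoly \<Rightarrow> 'k mpoly" where
  "mpoly_filter Q P = (\<Sum>m\<in>{m\<in>Poly_Mapping.keys P. Q m}. Poly_Mapping.single m (Poly_Mapping.lookup P m))"

lemma keys_mpoly_filter: "Poly_Mapping.keys (mpoly_filter Q P) \<subseteq> {m\<in>Poly_Mapping.keys P. Q m}"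
  unfolding mpoly_filter_def using keys_sum[of "\<lambda>m. Poly_Mapping.single m (Poly_Mapping.lookup P m)"] by force

lemma mpoly_filter_split: "P = mpoly_filter Q P + mpoly_filter (\<lambda>m. \<not> Q m) P"
proof -
  have "P = (\<Sum>m\<in>Poly_Mapping.keys P. Poly_Mapping.single m (Poly_Mapping.lookup P m))"
    by (rule poly_mapping_eq_sum_single)
  also have "\<dots> = mpoly_filter Q P + mpoly_filter (\<lambda>m. \<not> Q m) P"
    unfolding mpoly_filter_def by (subst sum.union_disjoint[symmetric]) (auto intro: sum.cong)
  finally show ?thesis .
qed

lemma mpoly_eval_mpoly_filter:
  "mpoly_eval (mpoly_filter Q P) v x = (\<Sum>m\<in>{m\<in>Poly_Mapping.keys P. Q m}. Poly_Mapping.lookup P m * monom_eval v m x)"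
  unfolding mpoly_filter_def by (simp add: mpoly_eval_sum mpoly_eval_single)

subsection \<open>The kernel of evaluation\<close>

definition slice :: "'k::field \<Rightarrow> 'k \<Rightarrow> 'k \<Rightarrow> 'k \<Rightarrow> 'k \<Rightarrow> 'k^3^3" where
  "slice u v w a b = mat3 u 0 0 a v 0 0 b w"

text \<open>On the slice the generators take the values \<open>e\<^sub>1, e\<^sub>2, e\<^sub>3\<close> of \<open>u, v, w\<close>, then
  \<open>0, ab, a\<^sup>2b, ab\<^sup>2\<close>. A reduced monomial without \<open>Y\<^sub>3\<close> is therefore sent to the monomial in
  \<open>e\<^sub>1, e\<^sub>2, e\<^sub>3, a, b\<close> with the following exponents, and this assignment is injective.\<close>

definition slice_exponent :: "(nat \<Rightarrow>\<^sub>0 nat) \<Rightarrow> nat \<Rightarrow> nat" where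
  "slice_exponent m i =
     (if i = 0 then Poly_Mapping.lookup m 0 else if i = 1 then Poly_Mapping.lookup m 1
      else if i = 2 then Poly_Mapping.lookup m 2
      else if i = 3 then Poly_Mapping.lookup m 4 + 2 * Poly_Mapping.lookup m 5 + Poly_Mapping.lookup m 6
      else if i = 4 then Poly_Mapping.lookup m 4 + Poly_Mapping.lookup m 5 + 2 * Poly_Mapping.lookup m 6
      else 0)"

lemma prod_lessThan_5: "(\<Prod>i<(5::nat). f i) = f 0 * f 1 * f 2 * f 3 * (f 4 :: 'a::comm_monoid_mult)"
  by (simp add: numeral_eq_Suc lessThan_Suc mult_ac)

lemma monom_eval_gen_slice:
  fixes u v w a b :: "'k::field"
  assumes "Poly_Mapping.keys m \<subseteq> {0..<7}" "Poly_Mapping.lookup m 3 = 0"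
  shows "monom_eval gen m (slice u v w a b) = (\<Prod>i<5. [u + v + w, u * v + v * w + u * w, u * v * w, a, b] ! i
           ^ slice_exponent m i)"
proof -
  have "(a * b) ^ l4 * (a^2 * b) ^ l5 * (a * b^2) ^ l6 = a ^ (l4 + 2 * l5 + l6) * b ^ (l4 + l5 + 2 * l6)"
    for l4 l5 l6 :: nat
    by (simp add: power_add power_mult_distrib power_mult[symmetric] mult_ac)
  moreover have "s1 (slice u v w a b) = u + v + w" "s2 (slice u v w a b) = u * v + v * w + u * w"
    "s3 (slice u v w a b) = u * v * w" "minor 1 3 (slice u v w a b) = a * b"
    "d1 (slice u v w a b) = a^2 * b" "d2 (slice u v w a b) = a * b^2"
    unfolding slice_def by (simp_all add: generator_eqs algebra_simps power2_eq_square)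
  ultimately show ?thesis
    unfolding monom_eval_gen_eq[OF assms(1)] prod_lessThan_5 slice_exponent_def
    using assms(2) by (simp add: mult.assoc)
qed

lemma inj_on_slice_exponent:
  "inj_on slice_exponent {m. Poly_Mapping.keys m \<subseteq> {0..<7} \<and> Poly_Mapping.lookup m 3 = 0
     \<and> (Poly_Mapping.lookup m 5 = 0 \<or> Poly_Mapping.lookup m 6 = 0)}"
proof (rule inj_onI, rule poly_mapping_eqI)
  fix m m' i
  assume m: "m \<in> {m. Poly_Mapping.keys m \<subseteq> {0..<7} \<and> Poly_Mapping.lookup m 3 = 0
              \<and> (Poly_Mapping.lookup m 5 = 0 \<or> Poly_Mapping.lookup m 6 = 0)}"
    and m': "m' \<in> {m. Poly_Mapping.keys m \<subseteq> {0..<7} \<and> Poly_Mapping.lookup m 3 = 0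
              \<and> (Poly_Mapping.lookup m 5 = 0 \<or> Poly_Mapping.lookup m 6 = 0)}"
    and eq: "slice_exponent m = slice_exponent m'"
  have "slice_exponent m k = slice_exponent m' k" for k using eq by simp
  from this[of 0] this[of 1] this[of 2] this[of 3] this[of 4] m m'
  have "Poly_Mapping.lookup m k = Poly_Mapping.lookup m' k" if "k < 7" for k
    using that unfolding less_7_cases slice_exponent_def by auto
  moreover have "i \<notin> Poly_Mapping.keys m" "i \<notin> Poly_Mapping.keys m'" if "\<not> i < 7"
    using m m' that by auto
  ultimately show "Poly_Mapping.lookup m i = Poly_Mapping.lookup m' i"
    by (cases "i < 7") (auto simp: in_keys_iff)
qed

lemma mpoly_eval_gen_slice:
  fixes B :: "'k::field mpoly"
  assumes vars: "mpoly_vars_in {0..<7} B"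
    and no_Y3: "\<forall>m\<in>Poly_Mapping.keys B. Poly_Mapping.lookup m 3 = 0"
    and uvw: "u + v + w = z 0" "u * v + v * w + u * w = z 1" "u * v * w = z 2"
  shows "mpoly_eval B gen (slice u v w (z 3) (z 4))
    = (\<Sum>m\<in>Poly_Mapping.keys B. Poly_Mapping.lookup B m * (\<Prod>i<5. z i ^ slice_exponent m i))"
  unfolding mpoly_eval_eq_sum_monom
proof (rule sum.cong[OF refl])
  fix m assume m: "m \<in> Poly_Mapping.keys B"
  have km: "Poly_Mapping.keys m \<subseteq> {0..<7}" "Poly_Mapping.lookup m 3 = 0"
    using m vars no_Y3 unfolding mpoly_vars_in_def by auto
  show "Poly_Mapping.lookup B m * monom_eval gen m (slice u v w (z 3) (z 4))
      = Poly_Mapping.lookup B m * (\<Prod>i<5. z i ^ slice_exponent m i)"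
    unfolding monom_eval_gen_slice[OF km] prod_lessThan_5 using uvw by simp
qed

text \<open>The values of \<open>e\<^sub>1, e\<^sub>2, e\<^sub>3\<close> on the slice are arbitrary since \<open>k\<close> is algebraically closed.\<close>

lemma reduced_eq_0_if_vanishes_on_slice:
  fixes B :: "'k::field mpoly"
  assumes ac: "alg_closed_field TYPE('k)"
    and vars: "mpoly_vars_in {0..<7} B" and red: "reduced B"
    and no_Y3: "\<forall>m\<in>Poly_Mapping.keys B. Poly_Mapping.lookup m 3 = 0"
    and van: "\<forall>u v w a b. mpoly_eval B gen (slice u v w a b) = 0"
  shows "B = 0"
proof -
  define K where "K = Poly_Mapping.keys B"
  have inj: "inj_on slice_exponent K"
    using vars red no_Y3 unfolding K_def mpoly_vars_in_def reduced_def
    by (intro inj_on_subset[OF inj_on_slice_exponent]) auto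
  define c where "c e = Poly_Mapping.lookup B (inv_into K slice_exponent e)" for e
  have "\<forall>e\<in>slice_exponent ` K. c e = 0"
  proof (rule coeffs_eq_0_if_vanishes_on_grid[where D = UNIV and n = 5])
    show "infinite (UNIV :: 'k set)" by (rule alg_closed_field_infinite[OF ac])
    show "\<forall>e\<in>slice_exponent ` K. \<forall>e'\<in>slice_exponent ` K. (\<forall>i<5. e i = e' i) \<longrightarrow> e = e'"
    proof (intro ballI impI ext)
      fix e e' i assume "e \<in> slice_exponent ` K" "e' \<in> slice_exponent ` K" and "\<forall>i<5. e i = e' i"
      then show "e i = e' i" by (cases "i < 5") (auto simp: slice_exponent_def)
    qed
    show "\<forall>z. (\<forall>i<5. z i \<in> UNIV) \<longrightarrow> (\<Sum>e\<in>slice_exponent ` K. c e * (\<Prod>i<5. z i ^ e i)) = 0"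
    proof (intro allI impI)
      fix z :: "nat \<Rightarrow> 'k"
      obtain u v w where uvw: "u + v + w = z 0" "u * v + v * w + u * w = z 1" "u * v * w = z 2"
        using alg_closed_field_elementary_symmetric[OF ac] by blast
      have "(\<Sum>e\<in>slice_exponent ` K. c e * (\<Prod>i<5. z i ^ e i))
          = (\<Sum>m\<in>K. c (slice_exponent m) * (\<Prod>i<5. z i ^ slice_exponent m i))"
        by (rule sum.reindex[OF inj, unfolded comp_def])
      also have "\<dots> = mpoly_eval B gen (slice u v w (z 3) (z 4))"
        unfolding mpoly_eval_gen_slice[OF vars no_Y3 uvw] K_def c_def
        using inv_into_f_f[OF inj] unfolding K_def by simp
      finally show "(\<Sum>e\<in>slice_exponent ` K. c e * (\<Prod>i<5. z i ^ e i)) = 0" using van by simp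
    qed
  qed (simp add: K_def)
  then have "\<forall>m\<in>K. Poly_Mapping.lookup B m = 0"
    unfolding c_def using inv_into_f_f[OF inj] by auto
  then show "B = 0" unfolding K_def by (intro poly_mapping_eqI) (auto simp: in_keys_iff)
qed

definition div_Y3 :: "'k::comm_ring_1 mpoly \<Rightarrow> 'k mpoly" where
  "div_Y3 B = (\<Sum>m\<in>{m\<in>Poly_Mapping.keys B. Poly_Mapping.lookup m 3 \<noteq> 0}.
                 Poly_Mapping.single (m - sg 3 1) (Poly_Mapping.lookup B m))"

lemma mvar_3_mult_div_Y3: "mvar 3 * div_Y3 B = mpoly_filter (\<lambda>m. Poly_Mapping.lookup m 3 \<noteq> 0) B"
proof -
  have "sg 3 1 + (m - sg 3 1) = m" if "Poly_Mapping.lookup m 3 \<noteq> 0" for m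
    using that by (intro poly_mapping_eqI) (auto simp: lookup_add lookup_minus lookup_single when_def)
  then show ?thesis
    unfolding div_Y3_def mpoly_filter_def mvar_def sum_distrib_left
    by (intro sum.cong) (simp_all add: mult_single)
qed

lemma keys_div_Y3:
  assumes "m' \<in> Poly_Mapping.keys (div_Y3 B)"
  obtains m where "m \<in> Poly_Mapping.keys B" "Poly_Mapping.lookup m 3 = Suc (Poly_Mapping.lookup m' 3)"
    "Poly_Mapping.keys m' \<subseteq> Poly_Mapping.keys m"
    "Poly_Mapping.lookup m' 5 = Poly_Mapping.lookup m 5" "Poly_Mapping.lookup m' 6 = Poly_Mapping.lookup m 6"
proof -
  obtain m where "m \<in> Poly_Mapping.keys B" "Poly_Mapping.lookup m 3 \<noteq> 0" "m' = m - sg 3 1"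
    using assms keys_sum[of "\<lambda>m. Poly_Mapping.single (m - sg 3 1) (Poly_Mapping.lookup B m)"]
    unfolding div_Y3_def by (auto split: if_splits)
  then show ?thesis by (intro that) (auto simp: in_keys_iff lookup_minus lookup_single)
qed

lemma mpoly_vars_in_div_Y3: "mpoly_vars_in V B \<Longrightarrow> mpoly_vars_in V (div_Y3 B)"
  unfolding mpoly_vars_in_def by (metis keys_div_Y3 subset_trans)

lemma reduced_div_Y3: "reduced B \<Longrightarrow> reduced (div_Y3 B)"
  unfolding reduced_def by (metis keys_div_Y3)

text \<open>Since \<open>\<xi>\<^sub>3\<^sub>1\<close> vanishes on the slice, a reduced polynomial vanishing where \<open>\<xi>\<^sub>3\<^sub>1 = 0\<close> has no
  monomial free of \<open>Y\<^sub>3\<close>.\<close>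

lemma eq_mvar_3_mult_div_Y3_if_vanishes_on_xi31_zero:
  fixes B :: "'k::field mpoly"
  assumes ac: "alg_closed_field TYPE('k)"
    and vars: "mpoly_vars_in {0..<7} B" and red: "reduced B"
    and van: "\<forall>x. x$3$1 = 0 \<longrightarrow> mpoly_eval B gen x = 0"
  shows "B = mvar 3 * div_Y3 B"
proof -
  define B0 where "B0 = mpoly_filter (\<lambda>m. Poly_Mapping.lookup m 3 = 0) B"
  have B: "B = B0 + mvar 3 * div_Y3 B"
    unfolding B0_def mvar_3_mult_div_Y3 by (rule mpoly_filter_split)
  have "B0 = 0"
  proof (rule reduced_eq_0_if_vanishes_on_slice[OF ac])
    have "Poly_Mapping.keys B0 \<subseteq> Poly_Mapping.keys B"
      using keys_mpoly_filter unfolding B0_def by blast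
    then show "mpoly_vars_in {0..<7} B0" "reduced B0"
      using vars red by (auto intro: mpoly_vars_in_subset reduced_subset)
    show "\<forall>m\<in>Poly_Mapping.keys B0. Poly_Mapping.lookup m 3 = 0"
      using keys_mpoly_filter unfolding B0_def by blast
    have "mpoly_eval B gen (slice u v w a b) = mpoly_eval B0 gen (slice u v w a b)" for u v w a b :: 'k
      by (subst B) (simp add: mpoly_eval_add mpoly_eval_mult mpoly_eval_mvar slice_def)
    then show "\<forall>u v w a b. mpoly_eval B0 gen (slice u v w a b) = 0"
      using van by (simp add: slice_def)
  qed
  with B show ?thesis by simp
qed

lemma reduced_eq_0_if_eval_eq_0:
  fixes B :: "'k::field mpoly"
  assumes ac: "alg_closed_field TYPE('k)"
    and "mpoly_vars_in {0..<7} B" "reduced B" "\<forall>x. mpoly_eval B gen x = 0"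
  shows "B = 0"
proof -
  have "\<forall>B::'k mpoly. mpoly_vars_in {0..<7} B \<and> reduced B \<and> (\<forall>x. mpoly_eval B gen x = 0)
          \<and> (\<forall>m\<in>Poly_Mapping.keys B. Poly_Mapping.lookup m 3 < n) \<longrightarrow> B = 0" for n
  proof (induction n)
    case 0
    then show ?case by auto
  next
    case (Suc n)
    show ?case
    proof (intro allI impI, elim conjE)
      fix B :: "'k mpoly"
      assume B: "mpoly_vars_in {0..<7} B" "reduced B" "\<forall>x. mpoly_eval B gen x = 0"
        and deg: "\<forall>m\<in>Poly_Mapping.keys B. Poly_Mapping.lookup m 3 < Suc n"
      define B1 where "B1 = div_Y3 B"
      have B1: "B = mvar 3 * B1" "mpoly_vars_in {0..<7} B1" "reduced B1"
        using eq_mvar_3_mult_div_Y3_if_vanishes_on_xi31_zero[OF ac B(1,2)] B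
        unfolding B1_def by (auto intro: mpoly_vars_in_div_Y3 reduced_div_Y3)
      have "\<forall>x. x$3$1 \<noteq> 0 \<longrightarrow> mpoly_eval B1 gen x = 0"
        using B(3) unfolding B1(1) by (auto simp: mpoly_eval_mult mpoly_eval_mvar)
      then have "mpoly_eval B1 gen = (\<lambda>x. 0)"
        by (rule poly_fun_eq_0_if_vanishes_off_xi31[OF alg_closed_field_infinite[OF ac]
              mpoly_eval_gen_poly_fun[OF B1(2)]])
      moreover have "\<forall>m\<in>Poly_Mapping.keys B1. Poly_Mapping.lookup m 3 < n"
        using deg unfolding B1_def by (metis keys_div_Y3 Suc_less_SucD)
      ultimately have "B1 = 0" using Suc.IH B1(2,3) by simp
      then show "B = 0" using B1(1) by simp
    qed
  qed
  moreover have "\<forall>m\<in>Poly_Mapping.keys B. Poly_Mapping.lookup m 3 < Suc (Max ((\<lambda>m. Poly_Mapping.lookup m 3) ` Poly_Mapping.keys B))"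
    by (simp add: le_imp_less_Suc)
  ultimately show ?thesis using assms by blast
qed

theorem kernel_mpoly_eval_gen:
  assumes ac: "alg_closed_field TYPE('k::field)"
  shows "{P. mpoly_vars_in {0..<7} P \<and> mpoly_eval P (gen :: nat \<Rightarrow> 'k^3^3 \<Rightarrow> 'k) = (\<lambda>x. 0)}
       = {Q * relation_R | Q. mpoly_vars_in {0..<7} Q}"
proof (intro set_eqI iffI)
  fix P :: "'k mpoly"
  assume "P \<in> {P. mpoly_vars_in {0..<7} P \<and> mpoly_eval P (gen :: nat \<Rightarrow> 'k^3^3 \<Rightarrow> 'k) = (\<lambda>x. 0)}"
  then have P: "mpoly_vars_in {0..<7} P" "mpoly_eval P (gen :: nat \<Rightarrow> 'k^3^3 \<Rightarrow> 'k) = (\<lambda>x. 0)" by auto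
  obtain Q B where QB: "P = Q * relation_R + B" "mpoly_vars_in {0..<7} Q" "mpoly_vars_in {0..<7} B" "reduced B"
    using reduce_mod_relation[OF P(1)] .
  have "\<forall>x. mpoly_eval B (gen :: nat \<Rightarrow> 'k^3^3 \<Rightarrow> 'k) x = 0"
    using P(2) unfolding QB(1) by (simp add: fun_eq_iff mpoly_eval_add mpoly_eval_mult mpoly_eval_relation_R)
  then have "B = 0" by (rule reduced_eq_0_if_eval_eq_0[OF ac QB(3,4)])
  then show "P \<in> {Q * relation_R | Q. mpoly_vars_in {0..<7} Q}" using QB by auto
next
  fix P :: "'k mpoly"
  assume "P \<in> {Q * relation_R | Q. mpoly_vars_in {0..<7} Q}"
  then show "P \<in> {P. mpoly_vars_in {0..<7} P \<and> mpoly_eval P (gen :: nat \<Rightarrow> 'k^3^3 \<Rightarrow> 'k) = (\<lambda>x. 0)}"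
    by (auto intro: mpoly_vars_in_mult mpoly_vars_in_relation_R
             simp: fun_eq_iff mpoly_eval_mult mpoly_eval_relation_R)
qed

subsection \<open>The invariants of \<open>U\<close>\<close>

text \<open>If \<open>\<xi>\<^sub>3\<^sub>1 \<noteq> 0\<close>, conjugation by \<open>U\<close> clears the entries \<open>(1,1), (2,1), (3,2)\<close>; the remaining
  entries of this normal form are then determined by the generators.\<close>

lemma exists_unitri_normal_form:
  fixes x :: "'k::field^3^3"
  assumes "x$3$1 \<noteq> 0"
  shows "\<exists>u. upper_unitri u \<and> (matrix_inv u ** x ** u)$1$1 = 0 \<and> (matrix_inv u ** x ** u)$2$1 = 0
           \<and> (matrix_inv u ** x ** u)$3$2 = 0"
proof -
  define e where "e = x$2$1 / x$3$1"
  define a where "a = - x$3$2 / x$3$1"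
  define b where "b = a * e + (x$1$1 - a * x$2$1) / x$3$1"
  have "(matrix_inv (unitri a b e) ** x ** unitri a b e)$1$1 = 0 \<and> (matrix_inv (unitri a b e) ** x ** unitri a b e)$2$1 = 0
     \<and> (matrix_inv (unitri a b e) ** x ** unitri a b e)$3$2 = 0"
    unfolding conj_unitri mat3_mult using assms by (simp add: a_def b_def e_def field_simps)
  then show ?thesis using upper_unitri_unitri by blast
qed

definition normal_entry :: "3 \<Rightarrow> 3 \<Rightarrow> 'k::comm_ring_1 mpoly" where
  "normal_entry i j = (let c = mvar 3; m = mvar 4 in
     if i = 1 then (if j = 1 then 0 else if j = 2 then - mvar 6 * c else - m * c * mvar 0 - m^2 - mvar 1 * c^2)
     else if i = 2 then (if j = 1 then 0 else if j = 2 then - m * c^2 else - mvar 5 * c)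
     else (if j = 1 then c^4 else if j = 2 then 0 else mvar 0 * c^3 + m * c^2))"

lemma normal_entry_eq:
  fixes y :: "'k::field^3^3"
  assumes "y$1$1 = 0" "y$2$1 = 0" "y$3$2 = 0"
  shows "y$i$j * (y$3$1)^3 = mpoly_eval (normal_entry i j) gen y"
proof -
  have "i = 1 \<or> i = 2 \<or> i = 3" "j = 1 \<or> j = 2 \<or> j = 3" using exhaust_3 by auto
  then show ?thesis
    using assms by (auto simp: normal_entry_def Let_def mpoly_eval_simps generator_eqs algebra_simps
        power2_eq_square power3_eq_cube power4_eq_xxxx)
qed

lemma mpoly_vars_in_normal_entry: "mpoly_vars_in {0..<7} (normal_entry i j :: 'k::comm_ring_1 mpoly)"
proof -
  have "i = 1 \<or> i = 2 \<or> i = 3" "j = 1 \<or> j = 2 \<or> j = 3" using exhaust_3 by auto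
  then show ?thesis
    unfolding normal_entry_def Let_def
    by (elim disjE; simp; intro mpoly_vars_in_add mpoly_vars_in_diff mpoly_vars_in_uminus
        mpoly_vars_in_mult mpoly_vars_in_power mpoly_vars_in_mvar mpoly_vars_in_zero; simp)
qed

lemma xi31_in_gen_alg: "(\<lambda>x::'k::field^3^3. x$3$1) \<in> gen_alg"
proof -
  have "gen 3 = (\<lambda>x::'k^3^3. x$3$1)" by (rule ext) simp
  moreover have "gen 3 \<in> (gen_alg :: ('k^3^3 \<Rightarrow> 'k) set)" by (rule sg_gen) (rule imageI, simp)
  ultimately show ?thesis by simp
qed

lemma normal_entry_in_gen_alg: "mpoly_eval (normal_entry i j) gen \<in> gen_alg"
  using gen_alg_iff mpoly_vars_in_normal_entry by blast

definition has_normal_form :: "'k::field^3^3 \<Rightarrow> 'k^3^3 \<Rightarrow> bool" where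
  "has_normal_form x y \<longleftrightarrow> x$3$1 \<noteq> 0 \<and> (\<forall>i j. y$i$j * (x$3$1)^3 = mpoly_eval (normal_entry i j) gen x)"

lemma exists_normal_form_conj:
  fixes x :: "'k::field^3^3"
  assumes x: "x$3$1 \<noteq> 0"
  obtains u where "upper_unitri u" "has_normal_form x (matrix_inv u ** x ** u)"
proof -
  obtain u where u: "upper_unitri u" "(matrix_inv u ** x ** u)$1$1 = 0" "(matrix_inv u ** x ** u)$2$1 = 0"
    "(matrix_inv u ** x ** u)$3$2 = 0"
    using exists_unitri_normal_form[OF x] by blast
  define y where "y = matrix_inv u ** x ** u"
  have "y$3$1 = x$3$1"
    using inv_U_conj[OF subsetD[OF gen_alg_subset_inv_U xi31_in_gen_alg] u(1)] unfolding y_def .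
  moreover have "mpoly_eval (normal_entry i j) gen y = mpoly_eval (normal_entry i j) gen x" for i j
    using inv_U_conj[OF subsetD[OF gen_alg_subset_inv_U normal_entry_in_gen_alg] u(1)] unfolding y_def .
  moreover have "y$i$j * (y$3$1)^3 = mpoly_eval (normal_entry i j) gen y" for i j
    using normal_entry_eq u(2-4) unfolding y_def by blast
  ultimately have "has_normal_form x y" using x unfolding has_normal_form_def by simp
  with u(1) show ?thesis unfolding y_def by (rule that)
qed

lemma poly_fun_on_normal_form:
  fixes h :: "'k::field^3^3 \<Rightarrow> 'k"
  assumes "h \<in> poly_fun"
  shows "\<exists>N A. A \<in> gen_alg \<and> (\<forall>x y. has_normal_form x y \<longrightarrow> h y * (x$3$1)^N = A x)"
  using assms
proof (induction rule: poly_fun.induct)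
  case (pf_const c)
  show ?case by (intro exI[of _ 0] exI[of _ "\<lambda>x. c"] conjI sg_const) simp
next
  case (pf_coord i j)
  show ?case
    by (intro exI[of _ 3] exI[of _ "mpoly_eval (normal_entry i j) gen"] conjI normal_entry_in_gen_alg)
       (simp add: has_normal_form_def)
next
  case (pf_add f g)
  then obtain N1 A1 N2 A2 where A: "A1 \<in> gen_alg" "A2 \<in> gen_alg"
    and fg: "\<And>x y. has_normal_form x y \<Longrightarrow> f y * (x$3$1)^N1 = A1 x \<and> g y * (x$3$1)^N2 = A2 x"
    by metis
  have "(\<lambda>x. A1 x * (\<lambda>x. x$3$1 ^ N2) x + A2 x * (\<lambda>x. x$3$1 ^ N1) x) \<in> gen_alg"
    by (intro sg_add sg_mult A subalg_gen_power xi31_in_gen_alg)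
  moreover have "(f y + g y) * (x$3$1)^(N1 + N2) = A1 x * x$3$1 ^ N2 + A2 x * x$3$1 ^ N1"
    if "has_normal_form x y" for x y
  proof -
    have "(f y + g y) * (x$3$1)^(N1 + N2) = (f y * (x$3$1)^N1) * x$3$1 ^ N2 + (g y * (x$3$1)^N2) * x$3$1 ^ N1"
      by (simp add: power_add algebra_simps)
    with fg[OF that] show ?thesis by simp
  qed
  ultimately show ?case by blast
next
  case (pf_mult f g)
  then obtain N1 A1 N2 A2 where A: "A1 \<in> gen_alg" "A2 \<in> gen_alg"
    and fg: "\<And>x y. has_normal_form x y \<Longrightarrow> f y * (x$3$1)^N1 = A1 x \<and> g y * (x$3$1)^N2 = A2 x"
    by metis
  have "(\<lambda>x. A1 x * A2 x) \<in> gen_alg" by (intro sg_mult A)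
  moreover have "(f y * g y) * (x$3$1)^(N1 + N2) = A1 x * A2 x" if "has_normal_form x y" for x y
  proof -
    have "(f y * g y) * (x$3$1)^(N1 + N2) = (f y * (x$3$1)^N1) * (g y * (x$3$1)^N2)"
      by (simp add: power_add algebra_simps)
    with fg[OF that] show ?thesis by simp
  qed
  ultimately show ?case by blast
qed

lemma inv_U_times_xi31_power:
  fixes f :: "'k::field^3^3 \<Rightarrow> 'k"
  assumes ac: "alg_closed_field TYPE('k)" and f: "f \<in> inv_U"
  shows "\<exists>N P. mpoly_vars_in {0..<7} P \<and> (\<forall>x. f x * (x$3$1)^N = mpoly_eval P gen x)"
proof -
  have f_pf: "f \<in> poly_fun" using f unfolding inv_U_def by simp
  obtain N A where A: "A \<in> gen_alg" "\<forall>x y. has_normal_form x y \<longrightarrow> f y * (x$3$1)^N = A x"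
    using poly_fun_on_normal_form[OF f_pf] by blast
  have "f x * x$3$1 ^ N - A x = 0" if x: "x$3$1 \<noteq> 0" for x
  proof -
    obtain u where "upper_unitri u" "has_normal_form x (matrix_inv u ** x ** u)"
      using exists_normal_form_conj[OF x] .
    then show ?thesis using A(2) inv_U_conj[OF f] by fastforce
  qed
  moreover have "A \<in> poly_fun" using A(1) gen_alg_subset_inv_U unfolding inv_U_def by blast
  ultimately have "(\<lambda>x. f x * x$3$1 ^ N - A x) = (\<lambda>x. 0)"
    by (intro poly_fun_eq_0_if_vanishes_off_xi31 alg_closed_field_infinite[OF ac]
          poly_fun_diff pf_mult poly_fun_power pf_coord f_pf) auto
  moreover obtain P where "mpoly_vars_in {0..<7} P" "A = mpoly_eval P gen"
    using A(1) gen_alg_iff by blast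
  ultimately show ?thesis by (auto simp: fun_eq_iff)
qed

text \<open>Reduce modulo the relation and divide by \<open>\<xi>\<^sub>3\<^sub>1\<close> one factor at a time.\<close>

lemma gen_alg_if_times_xi31_power:
  fixes f :: "'k::field^3^3 \<Rightarrow> 'k"
  assumes ac: "alg_closed_field TYPE('k)"
  shows "f \<in> poly_fun \<Longrightarrow> mpoly_vars_in {0..<7} P \<Longrightarrow> (\<forall>x. f x * (x$3$1)^N = mpoly_eval P gen x)
    \<Longrightarrow> f \<in> gen_alg"
proof (induction N arbitrary: P)
  case 0
  then have "f = mpoly_eval P gen" by (simp add: fun_eq_iff)
  then show ?case using "0.prems"(2) gen_alg_iff by blast
next
  case (Suc N)
  obtain Q B where QB: "P = Q * relation_R + B" "mpoly_vars_in {0..<7} Q" "mpoly_vars_in {0..<7} B" "reduced B"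
    using reduce_mod_relation[OF Suc.prems(2)] .
  have B: "mpoly_eval B gen x = x$3$1 * (f x * (x$3$1)^N)" for x
    using Suc.prems(3) mpoly_eval_relation_R[of x]
    unfolding QB(1) by (simp add: mpoly_eval_add mpoly_eval_mult algebra_simps)
  define B1 where "B1 = div_Y3 B"
  have B1: "B = mvar 3 * B1" "mpoly_vars_in {0..<7} B1"
    using eq_mvar_3_mult_div_Y3_if_vanishes_on_xi31_zero[OF ac QB(3,4)] B mpoly_vars_in_div_Y3[OF QB(3)]
    unfolding B1_def by auto
  have "f x * x$3$1 ^ N - mpoly_eval B1 gen x = 0" if "x$3$1 \<noteq> 0" for x
    using B[of x] that unfolding B1(1) by (simp add: mpoly_eval_mult mpoly_eval_mvar)
  then have "(\<lambda>x. f x * x$3$1 ^ N - mpoly_eval B1 gen x) = (\<lambda>x. 0)"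
    by (intro poly_fun_eq_0_if_vanishes_off_xi31 alg_closed_field_infinite[OF ac])
       (auto intro!: poly_fun_intros Suc.prems(1) mpoly_eval_gen_poly_fun[OF B1(2)])
  then show ?case by (intro Suc.IH[OF Suc.prems(1) B1(2)]) (simp add: fun_eq_iff)
qed

theorem inv_U_eq_gen_alg:
  assumes "alg_closed_field TYPE('k::field)"
  shows "(inv_U :: ('k^3^3 \<Rightarrow> 'k) set) = gen_alg"
proof
  show "inv_U \<subseteq> (gen_alg :: ('k^3^3 \<Rightarrow> 'k) set)"
  proof
    fix f :: "'k^3^3 \<Rightarrow> 'k" assume f: "f \<in> inv_U"
    then have "f \<in> poly_fun" unfolding inv_U_def by simp
    then show "f \<in> gen_alg"
      using inv_U_times_xi31_power[OF assms f] gen_alg_if_times_xi31_power[OF assms] by blast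
  qed
qed (rule gen_alg_subset_inv_U)

subsection \<open>Weights\<close>

definition torus_conj :: "'k::field \<Rightarrow> 'k \<Rightarrow> 'k \<Rightarrow> 'k^3^3 \<Rightarrow> 'k^3^3" where
  "torus_conj a1 a2 a3 x = mat3 (x$1$1) (x$1$2 * a2 / a1) (x$1$3 * a3 / a1)
      (x$2$1 * a1 / a2) (x$2$2) (x$2$3 * a3 / a2) (x$3$1 * a1 / a3) (x$3$2 * a2 / a3) (x$3$3)"

lemma diag3_eq_mat3: "diag3 a1 a2 a3 = mat3 a1 0 0 0 a2 0 0 0 (a3::'k::field)"
  unfolding diag3_def by (simp add: vec_eq_iff forall_3)

lemma invertible_diag3:
  fixes a1 a2 a3 :: "'k::field"
  assumes "a1 \<noteq> 0" "a2 \<noteq> 0" "a3 \<noteq> 0"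
  shows "invertible (diag3 a1 a2 a3)"
  unfolding invertible_def diag3_eq_mat3
  by (intro exI[of _ "mat3 (1/a1) 0 0 0 (1/a2) 0 0 0 (1/a3)"]) (simp add: mat3_mult mat_1_eq_mat3 assms)

lemma conj_diag3:
  fixes a1 a2 a3 :: "'k::field"
  assumes "a1 \<noteq> 0" "a2 \<noteq> 0" "a3 \<noteq> 0"
  shows "matrix_inv (diag3 a1 a2 a3) ** x ** diag3 a1 a2 a3 = torus_conj a1 a2 a3 x"
proof -
  have "matrix_inv (diag3 a1 a2 a3) = mat3 (1/a1) 0 0 0 (1/a2) 0 0 0 (1/a3)"
    unfolding diag3_eq_mat3 by (rule matrix_inv_unique) (simp_all add: mat3_mult mat_1_eq_mat3 assms)
  then show ?thesis
    unfolding diag3_eq_mat3 torus_conj_def by (subst mat3_expand[of x]) (simp add: mat3_mult assms field_simps)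
qed

lemma act_diag3:
  "a1 \<noteq> 0 \<Longrightarrow> a2 \<noteq> 0 \<Longrightarrow> a3 \<noteq> 0 \<Longrightarrow> act (diag3 a1 a2 a3) f = (\<lambda>x. f (torus_conj a1 a2 a3 x))"
  unfolding act_def by (simp add: conj_diag3)

definition has_weight :: "int \<Rightarrow> int \<Rightarrow> int \<Rightarrow> ('k::field^3^3 \<Rightarrow> 'k) \<Rightarrow> bool" where
  "has_weight e1 e2 e3 f \<longleftrightarrow> (\<forall>a1 a2 a3 x. a1 \<noteq> 0 \<longrightarrow> a2 \<noteq> 0 \<longrightarrow> a3 \<noteq> 0 \<longrightarrow>
     f (torus_conj a1 a2 a3 x) = power_int a1 e1 * power_int a2 e2 * power_int a3 e3 * f x)"

lemma inv_U_wt_eq: "inv_U_wt e1 e2 e3 = {f \<in> inv_U. has_weight e1 e2 e3 f}"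
  unfolding inv_U_wt_def has_weight_def by (auto simp: act_diag3 fun_eq_iff)

lemma inv_G_subset_inv_U: "inv_G \<subseteq> inv_U"
  unfolding inv_G_def inv_U_def using invertible_upper_unitri by blast

lemma has_weight_inv_G:
  assumes "f \<in> inv_G"
  shows "has_weight 0 0 0 f"
  unfolding has_weight_def
proof (intro allI impI)
  fix a1 a2 a3 :: 'a and x assume nz: "a1 \<noteq> 0" "a2 \<noteq> 0" "a3 \<noteq> 0"
  have "act (diag3 a1 a2 a3) f = f" using assms invertible_diag3[OF nz] unfolding inv_G_def by blast
  from fun_cong[OF this[unfolded act_diag3[OF nz]], of x]
  show "f (torus_conj a1 a2 a3 x) = power_int a1 0 * power_int a2 0 * power_int a3 0 * f x" by simp
qed

lemma has_weight_cong:
  "has_weight e1 e2 e3 f \<Longrightarrow> e1 = e1' \<Longrightarrow> e2 = e2' \<Longrightarrow> e3 = e3' \<Longrightarrow> has_weight e1' e2' e3' f"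
  by simp

lemma has_weight_mult:
  "has_weight e1 e2 e3 f \<Longrightarrow> has_weight e1' e2' e3' g \<Longrightarrow>
   has_weight (e1 + e1') (e2 + e2') (e3 + e3') (\<lambda>x. f x * g x)"
  unfolding has_weight_def by (simp add: power_int_add mult_ac)

lemma has_weight_power:
  assumes "has_weight e1 e2 e3 f"
  shows "has_weight (int n * e1) (int n * e2) (int n * e3) (\<lambda>x. f x ^ n)"
proof -
  have "power_int a (int n * e) = power_int a e ^ n" for a :: 'a and e
    by (metis mult.commute power_int_mult power_int_of_nat)
  then show ?thesis using assms unfolding has_weight_def by (simp add: power_mult_distrib)
qed

lemma has_weight_generators:
  "has_weight 0 0 0 (s1 :: 'k::field^3^3 \<Rightarrow> 'k)" "has_weight 0 0 0 (s2 :: 'k^3^3 \<Rightarrow> 'k)"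
  "has_weight 0 0 0 (s3 :: 'k^3^3 \<Rightarrow> 'k)" "has_weight 1 0 (-1) (\<lambda>x::'k^3^3. x$3$1)"
  "has_weight 1 0 (-1) (minor 1 3 :: 'k^3^3 \<Rightarrow> 'k)" "has_weight 2 (-1) (-1) (d1 :: 'k^3^3 \<Rightarrow> 'k)"
  "has_weight 1 1 (-2) (d2 :: 'k^3^3 \<Rightarrow> 'k)"
proof -
  show "has_weight 0 0 0 (s1 :: 'k^3^3 \<Rightarrow> 'k)" "has_weight 0 0 0 (s2 :: 'k^3^3 \<Rightarrow> 'k)"
    "has_weight 0 0 0 (s3 :: 'k^3^3 \<Rightarrow> 'k)"
    unfolding has_weight_def
    by (simp_all add: conj_diag3[symmetric] s1_conj s2_conj s3_conj invertible_diag3)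
  show "has_weight 1 0 (-1) (\<lambda>x::'k^3^3. x$3$1)" "has_weight 1 0 (-1) (minor 1 3 :: 'k^3^3 \<Rightarrow> 'k)"
    "has_weight 2 (-1) (-1) (d1 :: 'k^3^3 \<Rightarrow> 'k)" "has_weight 1 1 (-2) (d2 :: 'k^3^3 \<Rightarrow> 'k)"
    unfolding has_weight_def torus_conj_def
    by (simp_all add: generator_eqs power_int_minus field_simps power2_eq_square)
qed

definition weight_P :: "(nat \<Rightarrow>\<^sub>0 nat) \<Rightarrow> nat" where
  "weight_P m = Poly_Mapping.lookup m 3 + Poly_Mapping.lookup m 4 + 2 * Poly_Mapping.lookup m 5 + Poly_Mapping.lookup m 6"

definition weight_Q :: "(nat \<Rightarrow>\<^sub>0 nat) \<Rightarrow> nat" where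
  "weight_Q m = Poly_Mapping.lookup m 3 + Poly_Mapping.lookup m 4 + Poly_Mapping.lookup m 5 + 2 * Poly_Mapping.lookup m 6"

lemma has_weight_monom_eval_gen:
  assumes "Poly_Mapping.keys m \<subseteq> {0..<7}"
  shows "has_weight (int (weight_P m)) (int (weight_Q m) - int (weight_P m)) (- int (weight_Q m))
           (monom_eval gen m :: 'k::field^3^3 \<Rightarrow> 'k)"
proof -
  have "monom_eval gen m = (\<lambda>x::'k^3^3. s1 x ^ Poly_Mapping.lookup m 0 * s2 x ^ Poly_Mapping.lookup m 1
      * s3 x ^ Poly_Mapping.lookup m 2 * x$3$1 ^ Poly_Mapping.lookup m 3 * minor 1 3 x ^ Poly_Mapping.lookup m 4
      * d1 x ^ Poly_Mapping.lookup m 5 * d2 x ^ Poly_Mapping.lookup m 6)"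
    by (rule ext) (rule monom_eval_gen_eq[OF assms])
  show ?thesis
    unfolding \<open>monom_eval gen m = _\<close>
    by (rule has_weight_cong, (rule has_weight_mult has_weight_power has_weight_generators)+)
       (simp_all add: weight_P_def weight_Q_def algebra_simps)
qed

lemma has_weight_subtorus:
  fixes f :: "'k::field^3^3 \<Rightarrow> 'k"
  assumes "has_weight (int P) e2 (- int Q) f" "y \<noteq> 0" "z \<noteq> 0"
  shows "f (torus_conj y 1 (1/z) x) = y ^ P * z ^ Q * f x"
  using assms unfolding has_weight_def by (simp add: power_int_minus power_divide)

lemma prod_lessThan_2: "(\<Prod>i<(2::nat). f i) = f 0 * (f 1 :: 'a::comm_monoid_mult)"
  by (simp add: numeral_2_eq_2)

text \<open>Separating the weight components of a polynomial function on the two-dimensional torus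
  \<open>diag(y, 1, 1/z)\<close>.\<close>

lemma weight_component:
  fixes g :: "'m \<Rightarrow> 'k::field"
  assumes inf: "infinite (UNIV :: 'k set)" and K: "finite K"
    and eq: "\<And>y z. y \<noteq> 0 \<Longrightarrow> z \<noteq> 0 \<Longrightarrow> (\<Sum>m\<in>K. g m * (y ^ p m * z ^ q m)) = y ^ P * z ^ Q * c"
  shows "(\<Sum>m\<in>{m\<in>K. p m = P \<and> q m = Q}. g m) = c"
proof -
  define \<phi> where "\<phi> m = (\<lambda>i::nat. if i = 0 then p m else if i = 1 then q m else 0)" for m
  define \<phi>\<^sub>0 where "\<phi>\<^sub>0 = (\<lambda>i::nat. if i = 0 then P else if i = 1 then Q else 0)"
  define S where "S = insert \<phi>\<^sub>0 (\<phi> ` K)"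
  define a where "a e = (\<Sum>m\<in>{m\<in>K. \<phi> m = e}. g m) - (if e = \<phi>\<^sub>0 then c else 0)" for e
  have fS: "finite S" unfolding S_def using K by simp
  have "\<forall>e\<in>S. a e = 0"
  proof (rule coeffs_eq_0_if_vanishes_on_grid[where D = "UNIV - {0}" and n = 2])
    show "infinite (UNIV - {0::'k})" using inf by simp
    show "finite S" by (rule fS)
    show "\<forall>e\<in>S. \<forall>e'\<in>S. (\<forall>i<2. e i = e' i) \<longrightarrow> e = e'"
      unfolding S_def \<phi>_def \<phi>\<^sub>0_def by (auto simp: fun_eq_iff less_2_cases_iff)
    show "\<forall>zz. (\<forall>i<2. zz i \<in> UNIV - {0}) \<longrightarrow> (\<Sum>e\<in>S. a e * (\<Prod>i<2. zz i ^ e i)) = 0"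
    proof (intro allI impI)
      fix zz :: "nat \<Rightarrow> 'k" assume "\<forall>i<2. zz i \<in> UNIV - {0}"
      then have nz: "zz 0 \<noteq> 0" "zz 1 \<noteq> 0" by auto
      define w where "w e = zz 0 ^ e 0 * zz 1 ^ e 1" for e :: "nat \<Rightarrow> nat"
      have "(\<Sum>e\<in>S. (\<Sum>m\<in>{m\<in>K. \<phi> m = e}. g m) * w e) = (\<Sum>m\<in>K. g m * w (\<phi> m))"
        by (rule sum_regroup_by[OF fS K]) (auto simp: S_def)
      also have "\<dots> = c * w \<phi>\<^sub>0"
        using eq[OF nz] by (simp add: w_def \<phi>_def \<phi>\<^sub>0_def mult_ac)
      also have "\<dots> = (\<Sum>e\<in>S. if e = \<phi>\<^sub>0 then c * w e else 0)"
        using fS by (simp add: S_def)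
      also have "\<dots> = (\<Sum>e\<in>S. (if e = \<phi>\<^sub>0 then c else 0) * w e)"
        by (rule sum.cong) auto
      finally have "(\<Sum>e\<in>S. a e * w e) = 0"
        unfolding a_def by (simp add: left_diff_distrib sum_subtractf)
      then show "(\<Sum>e\<in>S. a e * (\<Prod>i<2. zz i ^ e i)) = 0"
        unfolding w_def prod_lessThan_2 .
    qed
  qed
  then have "a \<phi>\<^sub>0 = 0" unfolding S_def by simp
  moreover have "{m\<in>K. \<phi> m = \<phi>\<^sub>0} = {m\<in>K. p m = P \<and> q m = Q}"
    unfolding \<phi>_def \<phi>\<^sub>0_def by (auto simp: fun_eq_iff)
  ultimately show ?thesis unfolding a_def by simp
qed

lemma mpoly_eval_gen_subtorus:
  fixes B :: "'k::field mpoly"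
  assumes vars: "mpoly_vars_in {0..<7} B" and "y \<noteq> 0" "z \<noteq> 0"
  shows "mpoly_eval B gen (torus_conj y 1 (1/z) x) = (\<Sum>m\<in>Poly_Mapping.keys B.
           Poly_Mapping.lookup B m * monom_eval gen m x * (y ^ weight_P m * z ^ weight_Q m))"
  unfolding mpoly_eval_eq_sum_monom
proof (rule sum.cong[OF refl])
  fix m assume "m \<in> Poly_Mapping.keys B"
  from has_weight_subtorus[OF has_weight_monom_eval_gen[OF mpoly_vars_in_keys[OF vars this]]] assms(2,3)
  show "Poly_Mapping.lookup B m * monom_eval gen m (torus_conj y 1 (1 / z) x)
      = Poly_Mapping.lookup B m * monom_eval gen m x * (y ^ weight_P m * z ^ weight_Q m)"
    by (auto simp: mult_ac)
qed

lemma weight_space_reduced_representative: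
  fixes f :: "'k::field^3^3 \<Rightarrow> 'k"
  assumes ac: "alg_closed_field TYPE('k)" and f: "f \<in> inv_U"
    and wt: "has_weight (int P) e2 (- int Q) f"
  obtains B where "mpoly_vars_in {0..<7} B" "reduced B"
    "\<forall>m\<in>Poly_Mapping.keys B. weight_P m = P \<and> weight_Q m = Q" "f = mpoly_eval B gen"
proof -
  obtain P0 where P0: "mpoly_vars_in {0..<7} P0" "f = mpoly_eval P0 gen"
    using f inv_U_eq_gen_alg[OF ac] gen_alg_iff by blast
  obtain Q0 B0 where QB: "P0 = Q0 * relation_R + B0" "mpoly_vars_in {0..<7} B0" "reduced B0"
    using reduce_mod_relation[OF P0(1)] by metis
  have f_B0: "f x = mpoly_eval B0 gen x" for x
    using P0(2) QB(1) mpoly_eval_relation_R[of x] by (simp add: mpoly_eval_add mpoly_eval_mult)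
  define B where "B = mpoly_filter (\<lambda>m. weight_P m = P \<and> weight_Q m = Q) B0"
  have "Poly_Mapping.keys B \<subseteq> {m\<in>Poly_Mapping.keys B0. weight_P m = P \<and> weight_Q m = Q}"
    unfolding B_def by (rule keys_mpoly_filter)
  then have "mpoly_vars_in {0..<7} B" "reduced B" "\<forall>m\<in>Poly_Mapping.keys B. weight_P m = P \<and> weight_Q m = Q"
    using QB(2,3) by (auto intro: mpoly_vars_in_subset reduced_subset)
  moreover have "mpoly_eval B gen x = f x" for x
  proof -
    have "(\<Sum>m\<in>Poly_Mapping.keys B0. Poly_Mapping.lookup B0 m * monom_eval gen m x * (y ^ weight_P m * z ^ weight_Q m))
        = y ^ P * z ^ Q * f x" if "y \<noteq> 0" "z \<noteq> 0" for y z
      using mpoly_eval_gen_subtorus[OF QB(2) that] has_weight_subtorus[OF wt that] f_B0 by metis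
    from weight_component[OF alg_closed_field_infinite[OF ac] finite_keys this]
    show ?thesis unfolding B_def mpoly_eval_mpoly_filter .
  qed
  ultimately show ?thesis by (intro that) (auto simp: fun_eq_iff)
qed

subsection \<open>Bases of the weight spaces\<close>

definition basis_monom :: "nat \<Rightarrow> nat \<Rightarrow> nat \<Rightarrow> nat \<Rightarrow> nat \<Rightarrow>\<^sub>0 nat" where
  "basis_monom j p a i = sg 3 i + sg 4 (a - i) + sg j p"

lemma lookup_basis_monom:
  assumes "j = 5 \<or> j = 6"
  shows "Poly_Mapping.lookup (basis_monom j p a i) k =
    (if k = 3 then i else if k = 4 then a - i else if k = j then p else 0)"
  using assms unfolding basis_monom_def by (auto simp: lookup_add lookup_single)

lemma keys_basis_monom: "j = 5 \<or> j = 6 \<Longrightarrow> Poly_Mapping.keys (basis_monom j p a i) \<subseteq> {0..<7}"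
  by (auto simp: in_keys_iff lookup_basis_monom split: if_splits)

lemma monom_eval_basis_monom:
  "j = 5 \<or> j = 6 \<Longrightarrow> monom_eval gen (basis_monom j p a i) x = gen j x ^ p * x$3$1 ^ i * minor 1 3 x ^ (a - i)"
  unfolding basis_monom_def by (auto simp: monom_eval_add monom_eval_single)

lemma basis_in_weight_space:
  assumes jc: "(j = 5 \<and> P = a + 2 * p \<and> Q = a + p) \<or> (j = 6 \<and> P = a + p \<and> Q = a + 2 * p)"
    and "i \<le> a"
  shows "monom_eval gen (basis_monom j p a i) \<in> (inv_U_wt (int P) (int Q - int P) (- int Q) :: ('k::field^3^3 \<Rightarrow> 'k) set)"
proof -
  have j: "j = 5 \<or> j = 6" using jc by auto
  have "monom_eval gen (basis_monom j p a i) = mpoly_eval (Poly_Mapping.single (basis_monom j p a i) 1) gen"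
    by (simp add: fun_eq_iff mpoly_eval_single)
  then have "monom_eval gen (basis_monom j p a i) \<in> (inv_U :: ('k^3^3 \<Rightarrow> 'k) set)"
    using gen_alg_subset_inv_U gen_alg_iff mpoly_vars_in_single[OF keys_basis_monom[OF j]] by blast
  moreover have "weight_P (basis_monom j p a i) = P" "weight_Q (basis_monom j p a i) = Q"
    using jc \<open>i \<le> a\<close> by (auto simp: weight_P_def weight_Q_def lookup_basis_monom)
  then have "has_weight (int P) (int Q - int P) (- int Q) (monom_eval gen (basis_monom j p a i) :: 'k^3^3 \<Rightarrow> 'k)"
    using has_weight_monom_eval_gen[OF keys_basis_monom[OF j, of p a i]] by simp
  ultimately show ?thesis unfolding inv_U_wt_eq by simp
qed

lemma poly_in_s_inv_G:
  assumes "finite M"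
  shows "(\<lambda>x::'k::field^3^3. \<Sum>m\<in>M. c m * (s1 x ^ e0 m * s2 x ^ e1 m * s3 x ^ e2 m)) \<in> inv_G"
proof -
  have "(\<lambda>x::'k^3^3. \<Sum>m\<in>M. c m * (s1 x ^ e0 m * s2 x ^ e1 m * s3 x ^ e2 m)) \<in> poly_fun"
    using gen_poly_fun[of 0] gen_poly_fun[of 1] gen_poly_fun[of 2]
    by (intro poly_fun_sum[OF assms] pf_mult pf_const poly_fun_power) simp_all
  then show ?thesis unfolding inv_G_def act_def by (simp add: fun_eq_iff s1_conj s2_conj s3_conj)
qed

text \<open>In a reduced polynomial of the given weight, \<open>Y\<^sub>j\<close> occurs with exponent \<open>p\<close>, the other
  one of \<open>Y\<^sub>5, Y\<^sub>6\<close> does not occur, and \<open>Y\<^sub>3, Y\<^sub>4\<close> have total degree \<open>a\<close>.\<close>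

lemma weight_space_spanned:
  fixes f :: "'k::field^3^3 \<Rightarrow> 'k"
  assumes ac: "alg_closed_field TYPE('k)"
    and jc: "(j = 5 \<and> P = a + 2 * p \<and> Q = a + p) \<or> (j = 6 \<and> P = a + p \<and> Q = a + 2 * p)"
    and f: "f \<in> inv_U_wt (int P) (int Q - int P) (- int Q)"
  shows "\<exists>c. (\<forall>i\<in>{0..a}. c i \<in> inv_G) \<and> f = (\<lambda>x. \<Sum>i\<in>{0..a}. c i x * monom_eval gen (basis_monom j p a i) x)"
proof -
  obtain B where B: "mpoly_vars_in {0..<7} B" "reduced B"
      "\<forall>m\<in>Poly_Mapping.keys B. weight_P m = P \<and> weight_Q m = Q" "f = mpoly_eval B gen"
    using weight_space_reduced_representative[OF ac] f unfolding inv_U_wt_eq by blast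
  define S where "S m x = s1 x ^ Poly_Mapping.lookup m 0 * s2 x ^ Poly_Mapping.lookup m 1
    * s3 x ^ Poly_Mapping.lookup m 2" for m :: "nat \<Rightarrow>\<^sub>0 nat" and x :: "'k^3^3"
  define c where "c i x = (\<Sum>m\<in>{m\<in>Poly_Mapping.keys B. Poly_Mapping.lookup m 3 = i}. Poly_Mapping.lookup B m * S m x)"
    for i and x :: "'k^3^3"
  have monom: "monom_eval gen m x = S m x * monom_eval gen (basis_monom j p a (Poly_Mapping.lookup m 3)) x"
    and "Poly_Mapping.lookup m 3 \<le> a" if m: "m \<in> Poly_Mapping.keys B" for m x
  proof -
    have "weight_P m = P" "weight_Q m = Q" "Poly_Mapping.lookup m 5 = 0 \<or> Poly_Mapping.lookup m 6 = 0"
      using m B(2,3) unfolding reduced_def by auto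
    then have "Poly_Mapping.lookup m 3 + Poly_Mapping.lookup m 4 = a" "Poly_Mapping.lookup m j = p"
      "Poly_Mapping.lookup m (11 - j) = 0"
      using jc unfolding weight_P_def weight_Q_def by auto
    moreover have "Poly_Mapping.keys m \<subseteq> {0..<7}" using m B(1) unfolding mpoly_vars_in_def by auto
    ultimately show "monom_eval gen m x = S m x * monom_eval gen (basis_monom j p a (Poly_Mapping.lookup m 3)) x"
      "Poly_Mapping.lookup m 3 \<le> a"
      using jc by (auto simp: monom_eval_gen_eq monom_eval_basis_monom S_def mult_ac)
  qed
  have "f x = (\<Sum>i\<in>{0..a}. c i x * monom_eval gen (basis_monom j p a i) x)" for x
  proof -
    have "f x = (\<Sum>m\<in>Poly_Mapping.keys B.
        (Poly_Mapping.lookup B m * S m x) * monom_eval gen (basis_monom j p a (Poly_Mapping.lookup m 3)) x)"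
      unfolding B(4) mpoly_eval_eq_sum_monom by (intro sum.cong) (simp_all add: monom mult_ac)
    also have "\<dots> = (\<Sum>i\<in>{0..a}. c i x * monom_eval gen (basis_monom j p a i) x)"
      unfolding c_def using \<open>\<And>m. m \<in> Poly_Mapping.keys B \<Longrightarrow> Poly_Mapping.lookup m 3 \<le> a\<close>
      by (intro sum_regroup_by[symmetric]) auto
    finally show ?thesis .
  qed
  moreover have "c i \<in> inv_G" for i
    unfolding c_def[abs_def] S_def by (rule poly_in_s_inv_G) simp
  ultimately show ?thesis by (intro exI[of _ c]) auto
qed

lemma lookup_mult_single_one:
  "Poly_Mapping.lookup (C * Poly_Mapping.single e (1::'k::comm_ring_1)) k
     = (\<Sum>m\<in>Poly_Mapping.keys C. if m + e = k then Poly_Mapping.lookup C m else 0)"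
proof -
  have "C * Poly_Mapping.single e 1 =
      (\<Sum>m\<in>Poly_Mapping.keys C. Poly_Mapping.single m (Poly_Mapping.lookup C m)) * Poly_Mapping.single e 1"
    by (subst poly_mapping_eq_sum_single[of C]) (rule refl)
  also have "\<dots> = (\<Sum>m\<in>Poly_Mapping.keys C. Poly_Mapping.single (m + e) (Poly_Mapping.lookup C m))"
    unfolding sum_distrib_right by (simp add: mult_single)
  finally show ?thesis by (simp add: lookup_sum lookup_single when_def)
qed

lemma lookup_sum_mult_single:
  fixes C :: "'i \<Rightarrow> ('a::cancel_comm_monoid_add \<Rightarrow>\<^sub>0 'k::comm_ring_1)"
  assumes "finite I" "i \<in> I"
    and distinct: "\<And>i' m'. i' \<in> I \<Longrightarrow> m' \<in> Poly_Mapping.keys (C i') \<Longrightarrow> m' + e i' = m + e i \<Longrightarrow> i' = i"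
  shows "Poly_Mapping.lookup (\<Sum>i\<in>I. C i * Poly_Mapping.single (e i) 1) (m + e i) = Poly_Mapping.lookup (C i) m"
proof -
  have "Poly_Mapping.lookup (\<Sum>i\<in>I. C i * Poly_Mapping.single (e i) 1) (m + e i)
      = (\<Sum>i'\<in>I. \<Sum>m'\<in>Poly_Mapping.keys (C i'). if m' + e i' = m + e i then Poly_Mapping.lookup (C i') m' else 0)"
    unfolding lookup_sum lookup_mult_single_one ..
  also have "\<dots> = (\<Sum>i'\<in>I. if i' = i then Poly_Mapping.lookup (C i) m else 0)"
  proof (rule sum.cong[OF refl])
    fix i' assume "i' \<in> I"
    then have "m' + e i' = m + e i \<longleftrightarrow> i' = i \<and> m' = m" if "m' \<in> Poly_Mapping.keys (C i')" for m'
      using distinct[OF _ that] by auto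
    then have "(\<Sum>m'\<in>Poly_Mapping.keys (C i'). if m' + e i' = m + e i then Poly_Mapping.lookup (C i') m' else 0)
        = (\<Sum>m'\<in>Poly_Mapping.keys (C i'). if i' = i \<and> m' = m then Poly_Mapping.lookup (C i') m' else 0)"
      by (intro sum.cong) auto
    also have "\<dots> = (if i' = i then Poly_Mapping.lookup (C i) m else 0)"
      by (cases "i' = i") (simp_all add: in_keys_iff)
    finally show "(\<Sum>m'\<in>Poly_Mapping.keys (C i'). if m' + e i' = m + e i then Poly_Mapping.lookup (C i') m' else 0)
        = (if i' = i then Poly_Mapping.lookup (C i) m else 0)" .
  qed
  also have "\<dots> = Poly_Mapping.lookup (C i) m" using assms(1,2) by simp
  finally show ?thesis .
qed

lemma inv_G_representative:
  fixes c :: "'k::field^3^3 \<Rightarrow> 'k"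
  assumes ac: "alg_closed_field TYPE('k)" and "c \<in> inv_G"
  shows "\<exists>C. mpoly_vars_in {0..<7} C \<and> c = mpoly_eval C gen \<and>
    (\<forall>m\<in>Poly_Mapping.keys C. Poly_Mapping.lookup m 3 = 0 \<and> Poly_Mapping.lookup m 5 = 0 \<and> Poly_Mapping.lookup m 6 = 0)"
proof -
  have "c \<in> inv_U" "has_weight (int 0) (int 0 - int 0) (- int 0) c"
    using assms(2) inv_G_subset_inv_U has_weight_inv_G by auto
  then obtain C where "mpoly_vars_in {0..<7} C" "\<forall>m\<in>Poly_Mapping.keys C. weight_P m = 0 \<and> weight_Q m = 0"
    "c = mpoly_eval C gen"
    by (rule weight_space_reduced_representative[OF ac])
  then show ?thesis by (auto simp: weight_P_def)
qed

lemma reduced_mult_basis_monom: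
  assumes "j = 5 \<or> j = 6" "\<forall>m\<in>Poly_Mapping.keys C. Poly_Mapping.lookup m 5 = 0 \<and> Poly_Mapping.lookup m 6 = 0"
  shows "reduced (C * Poly_Mapping.single (basis_monom j p a i) (1::'k::comm_ring_1))"
  unfolding reduced_def
proof
  fix k assume "k \<in> Poly_Mapping.keys (C * Poly_Mapping.single (basis_monom j p a i) 1)"
  then obtain m where "m \<in> Poly_Mapping.keys C" "k = m + basis_monom j p a i"
    using keys_mult[of C "Poly_Mapping.single (basis_monom j p a i) (1::'k)"] by auto
  then show "Poly_Mapping.lookup k 5 = 0 \<or> Poly_Mapping.lookup k 6 = 0"
    using assms by (auto simp: lookup_add lookup_basis_monom[OF assms(1)])
qed

text \<open>A relation \<open>\<Sum> c\<^sub>i b\<^sub>i = 0\<close> with \<open>G\<close>-invariant \<open>c\<^sub>i\<close> lifts to a reduced polynomial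
  vanishing identically; its monomials of degree \<open>i\<close> in \<open>Y\<^sub>3\<close> carry the coefficients of \<open>c\<^sub>i\<close>.\<close>

lemma basis_independent:
  fixes c :: "nat \<Rightarrow> 'k::field^3^3 \<Rightarrow> 'k"
  assumes ac: "alg_closed_field TYPE('k)" and j: "j = 5 \<or> j = 6"
    and c: "\<forall>i\<in>{0..a}. c i \<in> inv_G"
    and rel: "(\<lambda>x. \<Sum>i\<in>{0..a}. c i x * monom_eval gen (basis_monom j p a i) x) = (\<lambda>x. 0)"
  shows "\<forall>i\<in>{0..a}. c i = (\<lambda>x. 0)"
proof -
  have "\<forall>i\<in>{0..a}. \<exists>C. mpoly_vars_in {0..<7} C \<and> c i = mpoly_eval C gen \<and>
    (\<forall>m\<in>Poly_Mapping.keys C. Poly_Mapping.lookup m 3 = 0 \<and> Poly_Mapping.lookup m 5 = 0 \<and> Poly_Mapping.lookup m 6 = 0)"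
    using c inv_G_representative[OF ac] by simp
  then obtain C where C_all: "\<forall>i\<in>{0..a}. mpoly_vars_in {0..<7} (C i) \<and> c i = mpoly_eval (C i) gen \<and>
    (\<forall>m\<in>Poly_Mapping.keys (C i). Poly_Mapping.lookup m 3 = 0 \<and> Poly_Mapping.lookup m 5 = 0 \<and> Poly_Mapping.lookup m 6 = 0)"
    by (rule bchoice[elim_format]) blast
  have C: "mpoly_vars_in {0..<7} (C i) \<and> c i = mpoly_eval (C i) gen" if "i \<in> {0..a}" for i
    using C_all that by simp
  have C_lookup: "Poly_Mapping.lookup m 3 = 0 \<and> Poly_Mapping.lookup m 5 = 0 \<and> Poly_Mapping.lookup m 6 = 0"
    if "i \<in> {0..a}" "m \<in> Poly_Mapping.keys (C i)" for i m
    using C_all that by simp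
  define E where "E = (\<Sum>i\<in>{0..a}. C i * Poly_Mapping.single (basis_monom j p a i) 1)"
  have "E = 0"
  proof (rule reduced_eq_0_if_eval_eq_0[OF ac])
    show "mpoly_vars_in {0..<7} E"
      unfolding E_def using C keys_basis_monom[OF j]
      by (intro mpoly_vars_in_sum mpoly_vars_in_mult mpoly_vars_in_single) auto
    show "reduced E"
      unfolding E_def using C_lookup by (intro reduced_sum reduced_mult_basis_monom[OF j]) auto
    show "\<forall>x. mpoly_eval E gen x = 0"
      using rel C unfolding E_def
      by (simp add: fun_eq_iff mpoly_eval_sum mpoly_eval_mult mpoly_eval_single)
  qed
  have "Poly_Mapping.lookup (C i) m = 0" if i: "i \<in> {0..a}" and m: "m \<in> Poly_Mapping.keys (C i)" for i m
  proof -
    have "i' = i" if "i' \<in> {0..a}" "m' \<in> Poly_Mapping.keys (C i')"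
      and eq: "m' + basis_monom j p a i' = m + basis_monom j p a i" for i' m'
    proof -
      have "Poly_Mapping.lookup (m' + basis_monom j p a i') 3 = Poly_Mapping.lookup (m + basis_monom j p a i) 3"
        by (simp only: eq)
      then show "i' = i"
        using C_lookup[OF that(1,2)] C_lookup[OF i m] by (simp add: lookup_add lookup_basis_monom[OF j])
    qed
    then have "Poly_Mapping.lookup E (m + basis_monom j p a i) = Poly_Mapping.lookup (C i) m"
      unfolding E_def using i by (intro lookup_sum_mult_single) auto
    then show ?thesis using \<open>E = 0\<close> by simp
  qed
  then have "C i = 0" if "i \<in> {0..a}" for i
    using that by (intro poly_mapping_eqI) (metis in_keys_iff lookup_zero)
  then show ?thesis using C by simp
qed

lemma weight_space_basis:
  assumes ac: "alg_closed_field TYPE('k::field)"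
    and jc: "(j = 5 \<and> P = a + 2 * p \<and> Q = a + p) \<or> (j = 6 \<and> P = a + p \<and> Q = a + 2 * p)"
  shows "is_module_basis inv_G (inv_U_wt (int P) (int Q - int P) (- int Q))
           (\<lambda>i (x::'k^3^3). gen j x ^ p * xi 3 1 x ^ i * minor 1 3 x ^ (a - i)) {0..a}"
proof -
  have j: "j = 5 \<or> j = 6" using jc by auto
  have "(\<lambda>i (x::'k^3^3). gen j x ^ p * xi 3 1 x ^ i * minor 1 3 x ^ (a - i)) = (\<lambda>i. monom_eval gen (basis_monom j p a i))"
    by (simp add: fun_eq_iff monom_eval_basis_monom[OF j])
  show ?thesis
    unfolding is_module_basis_def \<open>(\<lambda>i x. _) = _\<close>
  proof (intro conjI ballI allI impI)
    fix i assume "i \<in> {0..a}"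
    then show "monom_eval gen (basis_monom j p a i) \<in> inv_U_wt (int P) (int Q - int P) (- int Q)"
      by (intro basis_in_weight_space[OF jc]) simp
  next
    fix f :: "'k^3^3 \<Rightarrow> 'k" assume "f \<in> inv_U_wt (int P) (int Q - int P) (- int Q)"
    then show "\<exists>c. (\<forall>i\<in>{0..a}. c i \<in> inv_G) \<and> f = (\<lambda>x. \<Sum>i\<in>{0..a}. c i x * monom_eval gen (basis_monom j p a i) x)"
      by (rule weight_space_spanned[OF ac jc])
  next
    fix c :: "nat \<Rightarrow> 'k^3^3 \<Rightarrow> 'k" and i
    assume "(\<forall>i\<in>{0..a}. c i \<in> inv_G) \<and> (\<lambda>x. \<Sum>i\<in>{0..a}. c i x * monom_eval gen (basis_monom j p a i) x) = (\<lambda>x. 0)"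
      and i: "i \<in> {0..a}"
    then have "\<forall>i\<in>{0..a}. c i = (\<lambda>x. 0)"
      by (elim conjE) (rule basis_independent[OF ac j])
    with i show "c i = (\<lambda>x. 0)" by blast
  qed
qed

lemma weight_space_basis_l1_l2:
  assumes ac: "alg_closed_field TYPE('k::field)" and l: "l1 mod 3 = l2 mod 3"
  shows "is_module_basis inv_G
     (inv_U_wt ((2 * int l1 + int l2) div 3) ((int l2 - int l1) div 3) (- ((int l1 + 2 * int l2) div 3)))
     (\<lambda>i x::'k^3^3. (if l2 \<le> l1 then (\<lambda>x. d1 x ^ ((l1 - l2) div 3)) else (\<lambda>x. d2 x ^ ((l2 - l1) div 3))) x
        * xi 3 1 x ^ i * minor 1 3 x ^ (min l1 l2 - i)) {0..min l1 l2}"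
proof (cases "l2 \<le> l1")
  case True
  define p where "p = (l1 - l2) div 3"
  have "l1 = l2 + 3 * p" using l True unfolding p_def by (auto simp: mod_eq_dvd_iff_nat)
  then have "(2 * int l1 + int l2) div 3 = int (l2 + 2 * p)"
    "(int l2 - int l1) div 3 = int (l2 + p) - int (l2 + 2 * p)"
    "- ((int l1 + 2 * int l2) div 3) = - int (l2 + p)"
    by simp_all
  with weight_space_basis[OF ac, of 5 "l2 + 2 * p" l2 p "l2 + p"] True show ?thesis
    unfolding p_def by simp
next
  case False
  define q where "q = (l2 - l1) div 3"
  have "l1 \<le> l2" using False by simp
  then have "3 dvd (l2 - l1)" using l by (metis mod_eq_dvd_iff_nat)
  then have "l2 = l1 + 3 * q" using False unfolding q_def by auto
  then have "(2 * int l1 + int l2) div 3 = int (l1 + q)"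
    "(int l2 - int l1) div 3 = int (l1 + 2 * q) - int (l1 + q)"
    "- ((int l1 + 2 * int l2) div 3) = - int (l1 + 2 * q)"
    by simp_all
  with weight_space_basis[OF ac, of 6 "l1 + q" l1 q "l1 + 2 * q"] False show ?thesis
    unfolding q_def by simp
qed

theorem proposition3p2:
  fixes dummy :: "'k::field"
  assumes alg_closed: "\<And>p :: 'k poly. degree p \<noteq> 0 \<Longrightarrow> \<exists>z. poly p z = 0"
  shows
    "(\<forall>l1 l2 :: nat. l1 mod 3 = l2 mod 3 \<longrightarrow>
       (let a = min l1 l2;
            d = (if l2 \<le> l1 then (\<lambda>x::'k^3^3. d1 x ^ ((l1 - l2) div 3))
                 else (\<lambda>x. d2 x ^ ((l2 - l1) div 3)))
        in is_module_basis inv_G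
             (inv_U_wt ((2 * int l1 + int l2) div 3) ((int l2 - int l1) div 3)
                       (- ((int l1 + 2 * int l2) div 3)))
             (\<lambda>i x. d x * xi 3 1 x ^ i * minor 1 3 x ^ (a - i)) {0..a}))
     \<and>
     (let gens = (\<lambda>i::nat. [s1, s2, s3, xi 3 1, minor 1 3, d1, d2] ! i)
                   :: nat \<Rightarrow> 'k^3^3 \<Rightarrow> 'k;
          Y = (mvar :: nat \<Rightarrow> 'k mpoly);
          R = Y 5 * Y 6 - Y 4 ^ 3 - Y 3 * Y 4 ^ 2 * Y 0 - Y 3 ^ 2 * Y 4 * Y 1 - Y 3 ^ 3 * Y 2
      in inv_U = subalg_gen (gens ` {0..<7})
       \<and> {P. mpoly_vars_in {0..<7} P \<and> mpoly_eval P gens = (\<lambda>x. 0)}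
         = {Q * R | Q. mpoly_vars_in {0..<7} Q})"
proof -
  have ac: "alg_closed_field TYPE('k)"
    unfolding alg_closed_field_def using alg_closed by blast
  show ?thesis
    unfolding Let_def gen_def[symmetric] relation_R_def[symmetric]
    using weight_space_basis_l1_l2[OF ac] inv_U_eq_gen_alg[OF ac] kernel_mpoly_eval_gen[OF ac]
    by blast
qed

end
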